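(* Let $4\mid n$, $n\ge 8$, and let $G=\mathrm{P}\mathcal G_n$ be the projective Clifford-cyclotomic group, with a fixed isomorphism $G\cong S_4\ast_{D_4}D_n$. Suppose $G$ acts on a tree $X$ without terminal vertices, possibly with inversions, with finite stabilizers, such that the quotient graph of groups $X/G$ is finite. Then there exists a vertex of $X$ fixed by the factor $S_4$ which has valence $3$.
   Context: $\zeta_n=e^{2\pi i/n}$; $\mathcal G_n=\langle H,T_n\rangle\subset\mathrm U_2({\mathbf Z}[\zeta_n,1/2])$ with $H=\frac12\begin{pmatrix}1+i&1+i\\1+i&-1-i\end{pmatrix}$ and $T_n=\begin{pmatrix}1&0\\0&\zeta_n\end{pmatrix}$, and $\mathrm P\mathcal G_n$ is $\mathcal G_n$ modulo scalars. By a theorem of Radin and Sadun, $\mathrm P\mathcal G_n$ is isomorphic to an amalgamated free product $S_4\ast_{D_4}D_n$ of the symmetric group $S_4$ and a dihedral group $D_n$ over a dihedral subgroup $D_4$; "the factor $S_4$" refers to the image of $S_4$ under this fixed isomorphism. The valence of a vertex is the number of edges incident to it. *)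

theory Defs
  imports "HOL-Analysis.Analysis" "HOL-Algebra.Algebra"
begin

definition zeta :: "nat \<Rightarrow> complex" where
  "zeta n = cis (2 * pi / real n)"

definition Hmat :: "complex^2^2" where
  "Hmat = (\<chi> i j. (if i = 2 \<and> j = 2 then -1 else 1) * ((1 + \<i>) / 2))"

definition Tmat :: "nat \<Rightarrow> complex^2^2" where
  "Tmat n = (\<chi> i j. if i = j then (if i = 1 then 1 else zeta n) else 0)"

definition GL2 :: "(complex^2^2) monoid" where
  "GL2 = \<lparr>carrier = {A. invertible A}, mult = (**), one = mat 1\<rparr>"

definition CG :: "nat \<Rightarrow> (complex^2^2) monoid" where
  "CG n = GL2\<lparr>carrier := generate GL2 {Hmat, Tmat n}\<rparr>"

definition scalars :: "nat \<Rightarrow> (complex^2^2) set" where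
  "scalars n = {A \<in> carrier (CG n). \<exists>c. A = mat c}"

definition PCG :: "nat \<Rightarrow> (complex^2^2) set monoid" where
  "PCG n = CG n Mod scalars n"

text \<open>Dihedral group of order 2m, as the symmetries of the m-gon with vertices 0..m-1.\<close>
definition dihedral_group :: "nat \<Rightarrow> (nat \<Rightarrow> nat) monoid" where
  "dihedral_group m =
     \<lparr>carrier = {(\<lambda>i. if i < m then (k + i) mod m else i) | k. k < m}
             \<union> {(\<lambda>i. if i < m then (k + m - i) mod m else i) | k. k < m},
      mult = (\<circ>), one = id\<rparr>"

text \<open>G = A *_C B internally: A, B subgroups, C = A \<inter> B, A \<union> B generates G,
  and every nonempty reduced word (alternating between A - C and B - C) is nontrivial.\<close>
definition alternating :: "'a set \<Rightarrow> 'a set \<Rightarrow> 'a list \<Rightarrow> bool" where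
  "alternating P Q ws \<longleftrightarrow>
     (\<forall>i < length ws. ws ! i \<in> P \<union> Q) \<and>
     (\<forall>i. Suc i < length ws \<longrightarrow>
        (ws ! i \<in> P \<and> ws ! Suc i \<in> Q) \<or> (ws ! i \<in> Q \<and> ws ! Suc i \<in> P))"

definition amalgam_decomposition ::
  "('g, 'b) monoid_scheme \<Rightarrow> 'g set \<Rightarrow> 'g set \<Rightarrow> 'g set \<Rightarrow> bool" where
  "amalgam_decomposition G A B C \<longleftrightarrow>
     subgroup A G \<and> subgroup B G \<and> C = A \<inter> B \<and>
     generate G (A \<union> B) = carrier G \<and>
     (\<forall>ws. ws \<noteq> [] \<longrightarrow> alternating (A - C) (B - C) ws \<longrightarrow>
        foldr (\<otimes>\<^bsub>G\<^esub>) ws \<one>\<^bsub>G\<^esub> \<noteq> \<one>\<^bsub>G\<^esub>)"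

definition S4_D4_Dn_amalgam ::
  "nat \<Rightarrow> ('g, 'b) monoid_scheme \<Rightarrow> 'g set \<Rightarrow> 'g set \<Rightarrow> 'g set \<Rightarrow> bool" where
  "S4_D4_Dn_amalgam n G A B C \<longleftrightarrow>
     amalgam_decomposition G A B C \<and>
     G\<lparr>carrier := A\<rparr> \<cong> sym_group 4 \<and>
     G\<lparr>carrier := B\<rparr> \<cong> dihedral_group n \<and>
     G\<lparr>carrier := C\<rparr> \<cong> dihedral_group 4"

text \<open>Vertices V, edges E, origin map org, edge reversal rv (fixed-point-free involution);
  the terminus of e is org (rv e).\<close>
definition serre_graph :: "'v set \<Rightarrow> 'e set \<Rightarrow> ('e \<Rightarrow> 'v) \<Rightarrow> ('e \<Rightarrow> 'e) \<Rightarrow> bool" where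
  "serre_graph V E org rv \<longleftrightarrow>
     (\<forall>e \<in> E. org e \<in> V \<and> rv e \<in> E \<and> rv (rv e) = e \<and> rv e \<noteq> e)"

definition is_path :: "'e set \<Rightarrow> ('e \<Rightarrow> 'v) \<Rightarrow> ('e \<Rightarrow> 'e) \<Rightarrow> 'e list \<Rightarrow> bool" where
  "is_path E org rv es \<longleftrightarrow> set es \<subseteq> E \<and>
     (\<forall>i. Suc i < length es \<longrightarrow> org (rv (es ! i)) = org (es ! Suc i))"

definition reduced_path :: "'e set \<Rightarrow> ('e \<Rightarrow> 'v) \<Rightarrow> ('e \<Rightarrow> 'e) \<Rightarrow> 'e list \<Rightarrow> bool" where
  "reduced_path E org rv es \<longleftrightarrow> is_path E org rv es \<and>
     (\<forall>i. Suc i < length es \<longrightarrow> es ! Suc i \<noteq> rv (es ! i))"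

definition connected_graph :: "'v set \<Rightarrow> 'e set \<Rightarrow> ('e \<Rightarrow> 'v) \<Rightarrow> ('e \<Rightarrow> 'e) \<Rightarrow> bool" where
  "connected_graph V E org rv \<longleftrightarrow> V \<noteq> {} \<and>
     (\<forall>P \<in> V. \<forall>Q \<in> V. P = Q \<or> (\<exists>es. es \<noteq> [] \<and> is_path E org rv es \<and>
        org (hd es) = P \<and> org (rv (last es)) = Q))"

definition is_tree :: "'v set \<Rightarrow> 'e set \<Rightarrow> ('e \<Rightarrow> 'v) \<Rightarrow> ('e \<Rightarrow> 'e) \<Rightarrow> bool" where
  "is_tree V E org rv \<longleftrightarrow> serre_graph V E org rv \<and> connected_graph V E org rv \<and>
     \<not> (\<exists>es. es \<noteq> [] \<and> reduced_path E org rv es \<and> org (rv (last es)) = org (hd es))"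

definition valence :: "'e set \<Rightarrow> ('e \<Rightarrow> 'v) \<Rightarrow> 'v \<Rightarrow> nat" where
  "valence E org v = card {e \<in> E. org e = v}"

definition terminal_vertex :: "'e set \<Rightarrow> ('e \<Rightarrow> 'v) \<Rightarrow> 'v \<Rightarrow> bool" where
  "terminal_vertex E org v \<longleftrightarrow> finite {e \<in> E. org e = v} \<and> valence E org v = 1"

definition graph_action ::
  "('g, 'b) monoid_scheme \<Rightarrow> 'v set \<Rightarrow> 'e set \<Rightarrow> ('e \<Rightarrow> 'v) \<Rightarrow> ('e \<Rightarrow> 'e)
     \<Rightarrow> ('g \<Rightarrow> 'v \<Rightarrow> 'v) \<Rightarrow> ('g \<Rightarrow> 'e \<Rightarrow> 'e) \<Rightarrow> bool" where
  "graph_action G V E org rv \<phi>V \<phi>E \<longleftrightarrow>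
     group_action G V \<phi>V \<and> group_action G E \<phi>E \<and>
     (\<forall>g \<in> carrier G. \<forall>e \<in> E. \<phi>V g (org e) = org (\<phi>E g e) \<and> \<phi>E g (rv e) = rv (\<phi>E g e))"

end

theory Submission
  imports Defs
begin

(* Subdividing every edge removes inversions, keeps the valence of the old vertices and gives
   the new ones valence 2; as [S4 : D4] = 3, it suffices to treat actions without inversions.
   Then the finite factors A = S4 and B = Dn fix vertices, and no vertex is fixed by both: for
   a in A - C and b in B - C the product ab has infinite order, while stabilizers are finite.
   Let v be fixed by A and u by B at minimal distance, and e0 the first edge from v towards u.
   Its stabilizer in A contains C = D4 and is not A by minimality; C being maximal in A, the
   A-orbit of e0 (the star of v) has 3 edges.  Writing elements of G as reduced words in A and
   B shows that the geodesic from v to any point of the orbit Gv starts in the star.  An edge at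
   v outside the star would start a long reduced walk (there are no terminal vertices) on which,
   as there are finitely many edge orbits, some edge is the image g e of an earlier edge e; then
   g v would be closer to the end of g e than the walk through v allows.  So the edges at v form
   the star. *)

lemma common_prefix_decomp:
  "\<exists>c xs' ys'. xs = c @ xs' \<and> ys = c @ ys' \<and> (xs' \<noteq> [] \<longrightarrow> ys' \<noteq> [] \<longrightarrow> hd xs' \<noteq> hd ys')"
proof (induction xs arbitrary: ys)
  case Nil
  show ?case
    by (intro exI[of _ "[]"] exI[of _ ys]) simp
next
  case (Cons x xs)
  show ?case
  proof (cases "ys \<noteq> [] \<and> hd ys = x")
    case True
    then obtain ys1 where "ys = x # ys1"
      by (cases ys) auto
    moreover obtain c xs' ys' where "xs = c @ xs'" "ys1 = c @ ys'" "xs' \<noteq> [] \<longrightarrow> ys' \<noteq> [] \<longrightarrow> hd xs' \<noteq> hd ys'"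
      using Cons.IH by blast
    ultimately show ?thesis
      by (intro exI[of _ "x # c"] exI[of _ xs'] exI[of _ ys']) simp
  next
    case False
    then show ?thesis
      by (intro exI[of _ "[]"] exI[of _ "x # xs"] exI[of _ ys]) auto
  qed
qed

lemma pigeonhole_nth:
  assumes "set (map h xs) \<subseteq> S" "finite S" "card S < length xs"
  shows "\<exists>i j. i < j \<and> j < length xs \<and> h (xs ! i) = h (xs ! j)"
proof -
  have "card (set (map h xs)) < length (map h xs)"
    using assms card_mono[OF assms(2,1)] by simp
  then have "\<not> distinct (map h xs)"
    using distinct_card by fastforce
  then obtain i j where "i < length xs" "j < length xs" "i \<noteq> j" "h (xs ! i) = h (xs ! j)"
    by (auto simp: distinct_conv_nth)
  then show ?thesis
    by (metis linorder_neqE_nat)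
qed

lemma all_consecutive_Cons:
  "(\<forall>i. Suc i < length (x # xs) \<longrightarrow> R ((x # xs) ! i) ((x # xs) ! Suc i)) \<longleftrightarrow>
     (xs \<noteq> [] \<longrightarrow> R x (hd xs)) \<and> (\<forall>i. Suc i < length xs \<longrightarrow> R (xs ! i) (xs ! Suc i))"
    (is "?lhs \<longleftrightarrow> ?rhs")
proof
  assume ?lhs
  then show ?rhs
    using spec[OF \<open>?lhs\<close>, of 0] spec[OF \<open>?lhs\<close>, of "Suc _"] by (auto simp: hd_conv_nth)
next
  assume ?rhs
  show ?lhs
  proof (intro allI impI)
    fix i
    assume "Suc i < length (x # xs)"
    then show "R ((x # xs) ! i) ((x # xs) ! Suc i)"
      using \<open>?rhs\<close> by (cases i) (auto simp: hd_conv_nth)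
  qed
qed

lemma concat_replicate_nth:
  "i < 2 * k \<Longrightarrow> concat (replicate k [a, b]) ! i = (if even i then a else b)"
proof (induction k arbitrary: i)
  case (Suc k)
  show ?case
  proof (cases i)
    case (Suc j)
    then show ?thesis
      using Suc.IH[of "j - 1"] Suc.prems by (cases j) auto
  qed simp
qed simp

lemma alternating_replicate:
  assumes "a \<in> P" "b \<in> Q"
  shows "alternating P Q (concat (replicate k [a, b]))"
  unfolding alternating_def
proof (intro conjI allI impI)
  fix i
  assume "i < length (concat (replicate k [a, b]))"
  then show "concat (replicate k [a, b]) ! i \<in> P \<union> Q"
    using concat_replicate_nth[of i k a b] assms by (simp add: length_concat sum_list_replicate)
next
  fix i
  assume "Suc i < length (concat (replicate k [a, b]))"
  then have "Suc i < 2 * k"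
    by (simp add: length_concat sum_list_replicate)
  then show "concat (replicate k [a, b]) ! i \<in> P \<and> concat (replicate k [a, b]) ! Suc i \<in> Q \<or>
      concat (replicate k [a, b]) ! i \<in> Q \<and> concat (replicate k [a, b]) ! Suc i \<in> P"
    using concat_replicate_nth[of i k a b] concat_replicate_nth[of "Suc i" k a b] assms by auto
qed

section \<open>Groups and group actions\<close>

lemma (in monoid) foldr_replicate:
  "a \<in> carrier G \<Longrightarrow> b \<in> carrier G \<Longrightarrow> foldr (\<otimes>) (concat (replicate k [a, b])) \<one> = (a \<otimes> b) [^] k"
proof (induction k)
  case (Suc k)
  then have "foldr (\<otimes>) (concat (replicate (Suc k) [a, b])) \<one> = (a \<otimes> b) \<otimes> (a \<otimes> b) [^] k"
    by (simp add: m_assoc)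
  also have "\<dots> = (a \<otimes> b) [^] Suc k"
    using Suc.prems by (simp only: nat_pow_Suc2 m_closed)
  finally show ?case .
qed simp

lemma (in group) amalgam_power_ne_one:
  assumes amalgam: "amalgam_decomposition G A B C" and "a \<in> A - C" "b \<in> B - C" "(k :: nat) > 0"
  shows "(a \<otimes> b) [^] k \<noteq> \<one>"
proof -
  have "subgroup A G" "subgroup B G"
    and reduced: "\<And>ws. ws \<noteq> [] \<Longrightarrow> alternating (A - C) (B - C) ws \<Longrightarrow> foldr (\<otimes>) ws \<one> \<noteq> \<one>"
    using amalgam unfolding amalgam_decomposition_def by simp_all
  then have "foldr (\<otimes>) (concat (replicate k [a, b])) \<one> = (a \<otimes> b) [^] k"
    using assms(2,3) by (intro foldr_replicate) (auto dest: subgroup.mem_carrier)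
  moreover have "concat (replicate k [a, b]) \<noteq> []"
    using assms(4) by (cases k) auto
  then have "foldr (\<otimes>) (concat (replicate k [a, b])) \<one> \<noteq> \<one>"
    using reduced alternating_replicate[OF assms(2,3)] by blast
  ultimately show ?thesis
    by simp
qed

lemma (in group) finite_subgroup_power_eq_one:
  assumes "subgroup H G" "finite H" "g \<in> H"
  shows "\<exists>n > 0. g [^] (n :: nat) = \<one>"
proof -
  have "carrier (subgroup_generated G {g}) \<subseteq> H"
    using assms unfolding carrier_subgroup_generated by (intro generate_subgroup_incl) auto
  then have "finite (carrier (subgroup_generated G {g}))"
    using assms(2) finite_subset by blast
  moreover have "g \<in> carrier G"
    using assms(1,3) by (rule subgroup.mem_carrier)
  ultimately show ?thesis
    by (simp add: finite_cyclic_subgroup)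
qed

lemma (in group) card_subgroup_dvd:
  assumes "subgroup H G" "subgroup K G" "H \<subseteq> K"
  shows "card H dvd card K"
proof -
  interpret K: group "G\<lparr>carrier := K\<rparr>"
    using assms(2) by (rule subgroup_imp_group)
  have "card (rcosets\<^bsub>G\<lparr>carrier := K\<rparr>\<^esub> H) * card H = card K"
    using K.lagrange[OF subgroup_incl[OF assms]] by (simp add: order_def)
  then show ?thesis
    by (metis dvd_triv_right)
qed

lemma (in group) subgroup_between_prime_index:
  assumes C: "subgroup C G" and H: "subgroup H G" "C \<subseteq> H" "H \<subseteq> A"
    and A: "subgroup A G" "finite A" and index: "card A = p * card C" "Factorial_Ring.prime p"
  shows "H = C \<or> H = A"
proof -
  have "finite H"
    using A(2) H(3) finite_subset by blast
  then have "finite C"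
    using H(2) finite_subset by blast
  then have "card C \<noteq> 0"
    using subgroup.one_closed[OF C] by (auto simp: card_eq_0_iff)
  obtain k where k: "card H = card C * k"
    using card_subgroup_dvd[OF C H(1,2)] by (elim dvdE)
  obtain l where l: "card A = card H * l"
    using card_subgroup_dvd[OF H(1) A(1) H(3)] by (elim dvdE)
  have "p = k * l"
    using index(1) k l \<open>card C \<noteq> 0\<close> by (simp add: ac_simps)
  then have "k dvd p"
    by simp
  then have "k = 1 \<or> k = p"
    using index(2) by (simp add: prime_nat_iff)
  then have "card H = card C \<or> card H = card A"
    using k index(1) by (auto simp: mult.commute)
  then show ?thesis
  proof
    assume "card H = card C"
    then show ?thesis
      using card_subset_eq[OF \<open>finite H\<close> H(2)] by simp
  next
    assume "card H = card A"
    then show ?thesis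
      using card_subset_eq[OF A(2) H(3)] by simp
  qed
qed

lemma iso_card_carrier: "G \<cong> H \<Longrightarrow> card (carrier G) = card (carrier H)"
  unfolding is_iso_def iso_def using bij_betw_same_card by blast

lemma iso_finite_carrier: "G \<cong> H \<Longrightarrow> finite (carrier H) \<Longrightarrow> finite (carrier G)"
  unfolding is_iso_def iso_def using bij_betw_finite by blast

lemma dihedral_group_carrier:
  "carrier (dihedral_group m) =
     (\<lambda>k i. if i < m then (k + i) mod m else i) ` {..<m} \<union>
     (\<lambda>k i. if i < m then (k + m - i) mod m else i) ` {..<m}"
  unfolding dihedral_group_def by auto

lemma card_dihedral_group:
  assumes "m \<ge> 3"
  shows "card (carrier (dihedral_group m)) = 2 * m"
proof -
  define rot where "rot k i = (if i < m then (k + i) mod m else i)" for k i :: nat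
  define refl where "refl k i = (if i < m then (k + m - i) mod m else i)" for k i :: nat
  have "inj_on rot {..<m}" "inj_on refl {..<m}"
    using assms by (auto intro!: inj_onI dest!: fun_cong[where x = 0] simp: rot_def refl_def)
  moreover have "rot k \<noteq> refl k'" if "k < m" "k' < m" for k k'
  proof
    assume eq: "rot k = refl k'"
    have "rot k 0 = refl k' 0" "rot k 1 = refl k' 1"
      using eq by simp_all
    then have "k' = k" "(k + 1) mod m = (k' + m - 1) mod m"
      using that assms by (simp_all add: rot_def refl_def)
    then show False
      using that assms by (auto simp: mod_if split: if_splits)
  qed
  ultimately have "card (rot ` {..<m} \<union> refl ` {..<m}) = m + m"
    by (subst card_Un_disjoint) (auto simp: card_image)
  then show ?thesis
    using dihedral_group_carrier unfolding rot_def refl_def by simp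
qed

lemma finite_dihedral_group: "finite (carrier (dihedral_group m))"
  unfolding dihedral_group_carrier by simp

lemma card_sym_group_4: "card (carrier (sym_group 4)) = 24"
proof -
  have "card {p. p permutes {1..(4::nat)}} = fact 4"
    by (rule card_permutations) simp_all
  then show ?thesis
    unfolding sym_group_def by (simp add: fact_numeral)
qed

lemma group_actionI:
  fixes G (structure)
  assumes "group G"
    and closed: "\<And>g x. g \<in> carrier G \<Longrightarrow> x \<in> S \<Longrightarrow> \<phi> g x \<in> S"
    and extensional: "\<And>g. g \<in> carrier G \<Longrightarrow> \<phi> g \<in> extensional S"
    and one: "\<And>x. x \<in> S \<Longrightarrow> \<phi> \<one> x = x"
    and mult: "\<And>g h x. g \<in> carrier G \<Longrightarrow> h \<in> carrier G \<Longrightarrow> x \<in> S \<Longrightarrow> \<phi> (g \<otimes> h) x = \<phi> g (\<phi> h x)"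
  shows "group_action G S \<phi>"
proof -
  interpret group G
    by fact
  have Bij: "\<phi> g \<in> Bij S" if "g \<in> carrier G" for g
  proof -
    have "\<phi> (inv g) (\<phi> g x) = x" "\<phi> g (\<phi> (inv g) x) = x" if "x \<in> S" for x
      using \<open>g \<in> carrier G\<close> that by (simp_all flip: mult add: one)
    then have "bij_betw (\<phi> g) S S"
      using closed \<open>g \<in> carrier G\<close> by (intro bij_betw_byWitness[where f' = "\<phi> (inv g)"]) auto
    then show ?thesis
      using extensional that by (simp add: Bij_def)
  qed
  have "\<phi> (g \<otimes> h) = compose S (\<phi> g) (\<phi> h)" if "g \<in> carrier G" "h \<in> carrier G" for g h
    using that by (intro extensionalityI[OF extensional]) (simp_all add: compose_def mult)
  then have "\<phi> \<in> hom G (BijGroup S)"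
    using Bij by (auto simp: hom_def BijGroup_def)
  then show ?thesis
    unfolding group_action_def group_hom_def group_hom_axioms_def
    using group_BijGroup \<open>group G\<close> by blast
qed

lemma (in group_action) finite_transporter:
  assumes "finite (stabilizer G \<phi> x)" and "x \<in> E"
  shows "finite {g \<in> carrier G. \<phi> g x = y}"
proof (cases "\<exists>g0 \<in> carrier G. \<phi> g0 x = y")
  case True
  then obtain g0 where g0: "g0 \<in> carrier G" "\<phi> g0 x = y"
    by blast
  interpret group G
    using group_hom group_hom.axioms(1) by blast
  have "{g \<in> carrier G. \<phi> g x = y} \<subseteq> (\<lambda>s. g0 \<otimes> s) ` stabilizer G \<phi> x"
  proof
    fix g
    assume g: "g \<in> {g \<in> carrier G. \<phi> g x = y}"
    then have "\<phi> (inv g0 \<otimes> g) x = x"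
      using g0 assms(2) orbit_sym_aux by (simp add: composition_rule)
    moreover have "g = g0 \<otimes> (inv g0 \<otimes> g)"
      using g g0 by (simp add: m_assoc[symmetric])
    ultimately show "g \<in> (\<lambda>s. g0 \<otimes> s) ` stabilizer G \<phi> x"
      using g g0 unfolding stabilizer_def by blast
  qed
  then show ?thesis
    using assms(1) finite_surj by blast
next
  case False
  then have "{g \<in> carrier G. \<phi> g x = y} = {}"
    by blast
  then show ?thesis
    by (metis finite.emptyI)
qed

lemma (in group_action) generate_preserves:
  assumes "S \<subseteq> carrier G" "Z \<subseteq> E"
    and closed: "\<And>s x. s \<in> S \<Longrightarrow> x \<in> Z \<Longrightarrow> \<phi> s x \<in> Z"
    and inv_closed: "\<And>s x. s \<in> S \<Longrightarrow> x \<in> Z \<Longrightarrow> \<phi> (inv s) x \<in> Z"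
    and g: "g \<in> generate G S"
  shows "x \<in> Z \<Longrightarrow> \<phi> g x \<in> Z"
  using g
proof (induction arbitrary: x)
  case one
  then show ?case
    using assms(2) id_eq_one by (metis restrict_apply' subsetD)
next
  case (eng g h)
  moreover have "g \<in> carrier G" "h \<in> carrier G"
    using eng.hyps(1,2) group.generate_in_carrier[OF group_hom.axioms(1)[OF group_hom] assms(1)] by blast+
  ultimately show ?case
    using assms(2) composition_rule by (metis subsetD)
qed (use closed inv_closed in blast)+

section \<open>Serre graphs and trees\<close>

lemma is_path_Nil [simp]: "is_path E org rv []"
  and reduced_path_Nil [simp]: "reduced_path E org rv []"
  by (simp_all add: is_path_def reduced_path_def)

lemma is_path_Cons:
  "is_path E org rv (e # es) \<longleftrightarrow>
     e \<in> E \<and> is_path E org rv es \<and> (es \<noteq> [] \<longrightarrow> org (rv e) = org (hd es))"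
  unfolding is_path_def all_consecutive_Cons[where R = "\<lambda>e f. org (rv e) = org f"] by auto

lemma reduced_path_Cons:
  "reduced_path E org rv (e # es) \<longleftrightarrow>
     e \<in> E \<and> reduced_path E org rv es \<and> (es \<noteq> [] \<longrightarrow> org (rv e) = org (hd es) \<and> hd es \<noteq> rv e)"
  unfolding reduced_path_def all_consecutive_Cons[where R = "\<lambda>e f. f \<noteq> rv e"] is_path_Cons
  by auto

locale sgraph =
  fixes V :: "'v set" and E :: "'e set" and org :: "'e \<Rightarrow> 'v" and rv :: "'e \<Rightarrow> 'e"
  assumes serre_graph: "serre_graph V E org rv"
begin

abbreviation terminus :: "'e \<Rightarrow> 'v" where
  "terminus e \<equiv> org (rv e)"

lemma org_in_V: "e \<in> E \<Longrightarrow> org e \<in> V"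
  and rv_in_E: "e \<in> E \<Longrightarrow> rv e \<in> E"
  and rv_rv [simp]: "e \<in> E \<Longrightarrow> rv (rv e) = e"
  and rv_neq: "e \<in> E \<Longrightarrow> rv e \<noteq> e"
  using serre_graph unfolding serre_graph_def by auto

lemma terminus_in_V: "e \<in> E \<Longrightarrow> terminus e \<in> V"
  by (simp add: org_in_V rv_in_E)

fun walk :: "'v \<Rightarrow> 'e list \<Rightarrow> 'v \<Rightarrow> bool" where
  "walk x [] y \<longleftrightarrow> x = y \<and> x \<in> V"
| "walk x (e # es) y \<longleftrightarrow> e \<in> E \<and> org e = x \<and> walk (terminus e) es y"

fun reduced_walk :: "'v \<Rightarrow> 'e list \<Rightarrow> 'v \<Rightarrow> bool" where
  "reduced_walk x [] y \<longleftrightarrow> x = y \<and> x \<in> V"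
| "reduced_walk x (e # es) y \<longleftrightarrow>
     e \<in> E \<and> org e = x \<and> reduced_walk (terminus e) es y \<and> (es \<noteq> [] \<longrightarrow> hd es \<noteq> rv e)"

lemma walk_append: "walk x es y \<Longrightarrow> walk y fs z \<Longrightarrow> walk x (es @ fs) z"
  by (induction es arbitrary: x) auto

lemma walk_iff_is_path:
  "es \<noteq> [] \<Longrightarrow> walk x es y \<longleftrightarrow> is_path E org rv es \<and> org (hd es) = x \<and> terminus (last es) = y"
proof (induction es arbitrary: x)
  case (Cons e es)
  show ?case
  proof (cases "es = []")
    case True
    then show ?thesis
      by (auto simp: is_path_Cons terminus_in_V)
  next
    case False
    then have "walk x (e # es) y \<longleftrightarrow> e \<in> E \<and> org e = x \<and> is_path E org rv es \<and>
        org (hd es) = terminus e \<and> terminus (last es) = y"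
      using Cons.IH by simp
    then show ?thesis
      using False by (auto simp: is_path_Cons)
  qed
qed simp

lemma reduced_walk_iff_reduced_path:
  "es \<noteq> [] \<Longrightarrow>
     reduced_walk x es y \<longleftrightarrow> reduced_path E org rv es \<and> org (hd es) = x \<and> terminus (last es) = y"
proof (induction es arbitrary: x)
  case (Cons e es)
  show ?case
  proof (cases "es = []")
    case True
    then show ?thesis
      by (auto simp: reduced_path_Cons terminus_in_V)
  next
    case False
    then have "reduced_walk x (e # es) y \<longleftrightarrow> e \<in> E \<and> org e = x \<and> reduced_path E org rv es \<and>
        org (hd es) = terminus e \<and> terminus (last es) = y \<and> hd es \<noteq> rv e"
      using Cons.IH by auto
    then show ?thesis
      using False by (auto simp: reduced_path_Cons)
  qed
qed simp

lemma reduced_walk_endpoints: "reduced_walk x es y \<Longrightarrow> x \<in> V \<and> y \<in> V"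
  by (induction es arbitrary: x) (auto simp: org_in_V)

lemma reduced_walk_edges: "reduced_walk x es y \<Longrightarrow> set es \<subseteq> E"
  by (induction es arbitrary: x) auto

lemma reduced_walk_last: "reduced_walk x es y \<Longrightarrow> es \<noteq> [] \<Longrightarrow> y = terminus (last es)"
  by (simp add: reduced_walk_iff_reduced_path)

lemma reduced_walk_target_unique: "reduced_walk x es y \<Longrightarrow> reduced_walk x es y' \<Longrightarrow> y = y'"
  by (induction es arbitrary: x) auto

lemma reduced_walk_append:
  assumes "reduced_walk x es y" and "reduced_walk y fs z"
    and "es \<noteq> [] \<Longrightarrow> fs \<noteq> [] \<Longrightarrow> hd fs \<noteq> rv (last es)"
  shows "reduced_walk x (es @ fs) z"
  using assms
proof (induction es arbitrary: x)
  case (Cons e es)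
  then have "reduced_walk (terminus e) (es @ fs) z"
    by (cases es) auto
  moreover have "hd (es @ fs) \<noteq> rv e" if "es @ fs \<noteq> []"
    using Cons.prems that by (cases es) auto
  ultimately show ?case
    using Cons.prems(1) by auto
qed simp

lemma reduced_walk_appendD: "reduced_walk x (es @ fs) z \<Longrightarrow> \<exists>y. reduced_walk x es y \<and> reduced_walk y fs z"
proof (induction es arbitrary: x)
  case Nil
  then show ?case
    using reduced_walk_endpoints by auto
next
  case (Cons e es)
  then show ?case
    by (cases es) auto
qed

lemma reduced_walk_rev: "reduced_walk x es y \<Longrightarrow> reduced_walk y (rev (map rv es)) x"
proof (induction es arbitrary: x)
  case (Cons e es)
  then have "reduced_walk y (rev (map rv es)) (terminus e)" and "reduced_walk (terminus e) [rv e] x"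
    by (auto simp: rv_in_E org_in_V)
  moreover have "rv e \<noteq> rv (last (rev (map rv es)))" if "es \<noteq> []"
    using Cons.prems that by (auto simp: last_rev hd_map neq_Nil_conv)
  ultimately show ?case
    by (auto intro: reduced_walk_append)
qed simp

lemma walk_imp_reduced_walk: "walk x es y \<Longrightarrow> \<exists>fs. reduced_walk x fs y"
proof (induction es arbitrary: x)
  case Nil
  then show ?case
    by (metis reduced_walk.simps(1) walk.simps(1))
next
  case (Cons e es)
  then obtain fs where fs: "reduced_walk (terminus e) fs y" and e: "e \<in> E" "org e = x"
    by auto
  show ?case
  proof (cases "fs \<noteq> [] \<and> hd fs = rv e")
    case True
    then show ?thesis
      using fs e by (auto simp: neq_Nil_conv)
  next
    case False
    then have "reduced_walk x (e # fs) y"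
      using fs e by auto
    then show ?thesis ..
  qed
qed

lemma reduced_walk_take:
  assumes "reduced_walk x es y" "k < length es"
  shows "reduced_walk x (take (Suc k) es) (terminus (es ! k))"
proof -
  obtain z where z: "reduced_walk x (take (Suc k) es) z"
    using reduced_walk_appendD[of x "take (Suc k) es" "drop (Suc k) es" y] assms(1) by auto
  moreover have "take (Suc k) es \<noteq> []" "last (take (Suc k) es) = es ! k"
    using assms(2) by (auto simp: take_Suc_conv_app_nth)
  ultimately show ?thesis
    using reduced_walk_last[OF z] by simp
qed

lemma extend_past_non_terminal:
  assumes "\<not> terminal_vertex E org (terminus e)" "e \<in> E"
  shows "\<exists>f\<in>E. org f = terminus e \<and> f \<noteq> rv e"
proof (rule ccontr)
  assume "\<not> ?thesis"
  then have "{f \<in> E. org f = terminus e} = {rv e}"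
    using assms(2) rv_in_E by auto
  then show False
    using assms(1) unfolding terminal_vertex_def valence_def by simp
qed

lemma long_reduced_walk:
  assumes "\<And>x. x \<in> V \<Longrightarrow> \<not> terminal_vertex E org x" "e \<in> E"
  shows "\<exists>es y. reduced_walk (org e) (e # es) y \<and> length es = n"
proof (induction n)
  case 0
  then show ?case
    using assms(2) terminus_in_V by auto
next
  case (Suc n)
  then obtain es y where es: "reduced_walk (org e) (e # es) y" "length es = n"
    by blast
  define l where "l = last (e # es)"
  have "l \<in> E" "y = terminus l"
    using reduced_walk_edges[OF es(1)] reduced_walk_last[OF es(1)] unfolding l_def by auto
  then obtain f where f: "f \<in> E" "org f = y" "f \<noteq> rv l"
    using extend_past_non_terminal assms(1) terminus_in_V by blast
  then have "reduced_walk (org e) ((e # es) @ [f]) (terminus f)"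
    using es(1) terminus_in_V unfolding l_def by (intro reduced_walk_append) auto
  then show ?case
    using es(2) by (intro exI[of _ "es @ [f]"]) auto
qed

end

locale stree = sgraph V E org rv for V :: "'v set" and E :: "'e set" and org rv +
  assumes tree: "is_tree V E org rv"
begin

lemma V_nonempty: "V \<noteq> {}"
  using tree unfolding is_tree_def connected_graph_def by blast

lemma reduced_walk_exists:
  assumes "x \<in> V" and "y \<in> V"
  shows "\<exists>es. reduced_walk x es y"
proof (cases "x = y")
  case True
  then have "reduced_walk x [] y"
    using assms by simp
  then show ?thesis ..
next
  case False
  then obtain es where "es \<noteq> []" "is_path E org rv es" "org (hd es) = x" "terminus (last es) = y"
    using tree assms unfolding is_tree_def connected_graph_def by blast
  then have "walk x es y"
    using walk_iff_is_path by blast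
  then show ?thesis
    using walk_imp_reduced_walk by blast
qed

lemma reduced_walk_closed: "reduced_walk x es x \<Longrightarrow> es = []"
  using tree reduced_walk_iff_reduced_path unfolding is_tree_def by metis

lemma reduced_walk_unique: "reduced_walk x es y \<Longrightarrow> reduced_walk x fs y \<Longrightarrow> es = fs"
proof (induction es arbitrary: x fs)
  case Nil
  then show ?case
    using reduced_walk_closed reduced_walk_rev by fastforce
next
  case (Cons e es)
  show ?case
  proof (cases fs)
    case Nil
    then have "reduced_walk x (rev (map rv (e # es))) x"
      using Cons.prems reduced_walk_rev[OF Cons.prems(1)] by simp
    then show ?thesis
      using reduced_walk_closed by blast
  next
    case (Cons f fs')
    show ?thesis
    proof (cases "e = f")
      case True
      then show ?thesis
        using Cons.prems Cons.IH \<open>fs = f # fs'\<close> by auto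
    next
      case False
      have "reduced_walk y (rev (map rv fs)) x"
        using Cons.prems(2) by (rule reduced_walk_rev)
      moreover have "last (rev (map rv fs)) = rv f" and "f \<in> E"
        using Cons.prems(2) \<open>fs = f # fs'\<close> by (simp_all add: last_rev)
      ultimately have "reduced_walk y (rev (map rv fs) @ e # es) y"
        using Cons.prems(1) False by (intro reduced_walk_append) auto
      then show ?thesis
        using reduced_walk_closed by blast
    qed
  qed
qed

definition geodesic :: "'v \<Rightarrow> 'v \<Rightarrow> 'e list" where
  "geodesic x y = (THE es. reduced_walk x es y)"

definition dist :: "'v \<Rightarrow> 'v \<Rightarrow> nat" where
  "dist x y = length (geodesic x y)"

lemma geodesic_eq: "reduced_walk x es y \<Longrightarrow> geodesic x y = es"
  unfolding geodesic_def using reduced_walk_unique by blast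

lemma reduced_walk_geodesic: "x \<in> V \<Longrightarrow> y \<in> V \<Longrightarrow> reduced_walk x (geodesic x y) y"
  using reduced_walk_exists geodesic_eq by metis

lemma dist_eq: "reduced_walk x es y \<Longrightarrow> dist x y = length es"
  by (simp add: dist_def geodesic_eq)

lemma dist_self: "x \<in> V \<Longrightarrow> dist x x = 0"
  using dist_eq[of x "[]" x] by simp

lemma dist_sym: "reduced_walk x es y \<Longrightarrow> dist y x = dist x y"
  using dist_eq reduced_walk_rev by (metis length_map length_rev)

lemma dist_eq_0_iff: "x \<in> V \<Longrightarrow> y \<in> V \<Longrightarrow> dist x y = 0 \<longleftrightarrow> x = y"
  using reduced_walk_geodesic dist_eq dist_self by (metis length_0_conv reduced_walk.simps(1))

lemma dist_eq_1_geodesic: "dist x y = 1 \<Longrightarrow> \<exists>e. geodesic x y = [e]"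
  unfolding dist_def by (cases "geodesic x y") auto

lemma dist_next_vertex_lt_max:
  assumes m1: "m1 \<in> V" and m2: "m2 \<in> V" and s: "s \<in> V"
    and geo: "geodesic m1 m2 = e # es" and "dist m1 m2 \<ge> 2"
  shows "dist (terminus e) s < max (dist m1 s) (dist m2 s)"
proof -
  have P: "reduced_walk m1 (e # es) m2"
    using reduced_walk_geodesic[OF m1 m2] geo by simp
  have "es \<noteq> []"
    using \<open>dist m1 m2 \<ge> 2\<close> geo unfolding dist_def by auto
  define q where "q = geodesic m1 s"
  have Q: "reduced_walk m1 q s"
    unfolding q_def using reduced_walk_geodesic[OF m1 s] .
  show ?thesis
  proof (cases "q \<noteq> [] \<and> hd q = e")
    case True
    then obtain q' where "q = e # q'"
      by (cases q) auto
    then have "dist (terminus e) s = length q'" and "dist m1 s = length q"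
      using Q dist_eq[of m1 q s] dist_eq[of "terminus e" q' s] by auto
    then show ?thesis
      using \<open>q = e # q'\<close> by simp
  next
    case False
    have "reduced_walk m2 (rev (map rv (e # es)) @ q) s"
      using reduced_walk_rev[OF P] Q False P by (intro reduced_walk_append) (auto simp: last_rev)
    then have "dist m2 s = length es + 1 + length q"
      using dist_eq by fastforce
    moreover have "reduced_walk (terminus e) ([rv e] @ q) s"
      using Q False P by (intro reduced_walk_append) (auto simp: rv_in_E org_in_V)
    then have "dist (terminus e) s = 1 + length q"
      using dist_eq by fastforce
    ultimately show ?thesis
      using \<open>es \<noteq> []\<close> by (cases es) auto
  qed
qed

lemma dist_eq_2_of_adjacent:
  assumes "x \<in> V" "y \<in> V" "z \<in> V" "dist x y = 1" "dist y z = 1" "x \<noteq> z"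
  shows "dist x z = 2"
proof -
  obtain e f where "geodesic x y = [e]" and "geodesic y z = [f]"
    using dist_eq_1_geodesic assms by metis
  then have P: "reduced_walk x [e] y" and Q: "reduced_walk y [f] z"
    using reduced_walk_geodesic assms by metis+
  have "f \<noteq> rv e"
    using P Q \<open>x \<noteq> z\<close> by auto
  then have "reduced_walk x ([e] @ [f]) z"
    using P Q by (intro reduced_walk_append) auto
  then show ?thesis
    using dist_eq by fastforce
qed

definition ecc :: "'v set \<Rightarrow> 'v \<Rightarrow> nat" where
  "ecc S m = Max (dist m ` S)"

lemma dist_le_ecc: "finite S \<Longrightarrow> s \<in> S \<Longrightarrow> dist m s \<le> ecc S m"
  unfolding ecc_def by simp

lemma ecc_attained:
  assumes "finite S" and "S \<noteq> {}"
  shows "\<exists>s\<in>S. ecc S m = dist m s"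
proof -
  have "Max (dist m ` S) \<in> dist m ` S"
    using assms by (intro Max_in) auto
  then show ?thesis
    unfolding ecc_def by blast
qed

lemma ecc_minimizers_adjacent:
  assumes S: "finite S" "S \<noteq> {}" "S \<subseteq> V"
    and m1: "m1 \<in> V" "\<And>m. m \<in> V \<Longrightarrow> ecc S m1 \<le> ecc S m"
    and m2: "m2 \<in> V" "ecc S m2 = ecc S m1"
  shows "dist m1 m2 \<le> 1"
proof (rule ccontr)
  assume "\<not> dist m1 m2 \<le> 1"
  then have "dist m1 m2 \<ge> 2"
    by simp
  then obtain e es where geo: "geodesic m1 m2 = e # es"
    unfolding dist_def by (cases "geodesic m1 m2") auto
  have e: "terminus e \<in> V"
    using reduced_walk_geodesic[OF m1(1) m2(1)] geo by (simp add: terminus_in_V)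
  obtain s where s: "s \<in> S" "ecc S (terminus e) = dist (terminus e) s"
    using ecc_attained S by blast
  have "dist (terminus e) s < max (dist m1 s) (dist m2 s)"
    using dist_next_vertex_lt_max[OF m1(1) m2(1) _ geo \<open>dist m1 m2 \<ge> 2\<close>] s S by blast
  also have "\<dots> \<le> ecc S m1"
    using dist_le_ecc[OF S(1) s(1)] m2(2) by (metis max.bounded_iff)
  finally show False
    using m1(2)[OF e] s(2) by simp
qed

lemma reduced_walk_fork:
  assumes "reduced_walk u (c @ es) x" "reduced_walk u (c @ fs) y"
    and "es \<noteq> []" "fs \<noteq> [] \<Longrightarrow> hd fs \<noteq> hd es"
  shows "reduced_walk x (rev (map rv es) @ fs) y"
proof -
  obtain z z' where "reduced_walk u c z" "reduced_walk z es x" "reduced_walk u c z'" "reduced_walk z' fs y"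
    using reduced_walk_appendD assms(1,2) by metis
  then have "reduced_walk x (rev (map rv es)) z" "reduced_walk z fs y"
    using reduced_walk_rev reduced_walk_target_unique by blast+
  moreover have "hd es \<in> E"
    using reduced_walk_edges[OF \<open>reduced_walk z es x\<close>] assms(3) by auto
  ultimately show ?thesis
    using assms(3,4) by (intro reduced_walk_append) (auto simp: last_rev hd_map)
qed

end

section \<open>Groups acting on trees\<close>

locale tree_action = stree V E org rv for V :: "'v set" and E :: "'e set" and org rv +
  fixes G (structure) and \<phi>V :: "'g \<Rightarrow> 'v \<Rightarrow> 'v" and \<phi>E :: "'g \<Rightarrow> 'e \<Rightarrow> 'e"
  assumes graph_action: "graph_action G V E org rv \<phi>V \<phi>E"
begin

sublocale actV: group_action G V \<phi>V
  using graph_action unfolding graph_action_def by (elim conjE)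

sublocale actE: group_action G E \<phi>E
  using graph_action unfolding graph_action_def by (elim conjE)

sublocale group G
  by (rule group_hom.axioms(1)[OF actV.group_hom])

lemma org_act: "g \<in> carrier G \<Longrightarrow> e \<in> E \<Longrightarrow> \<phi>V g (org e) = org (\<phi>E g e)"
  and rv_act: "g \<in> carrier G \<Longrightarrow> e \<in> E \<Longrightarrow> \<phi>E g (rv e) = rv (\<phi>E g e)"
  using graph_action unfolding graph_action_def by auto

lemma terminus_act: "g \<in> carrier G \<Longrightarrow> e \<in> E \<Longrightarrow> \<phi>V g (terminus e) = terminus (\<phi>E g e)"
  by (simp add: org_act rv_act rv_in_E)

lemma act_one_V: "x \<in> V \<Longrightarrow> \<phi>V \<one> x = x"
  and act_one_E: "e \<in> E \<Longrightarrow> \<phi>E \<one> e = e"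
  by (metis actV.id_eq_one restrict_apply', metis actE.id_eq_one restrict_apply')

lemma act_V: "g \<in> carrier G \<Longrightarrow> x \<in> V \<Longrightarrow> \<phi>V g x \<in> V"
  and act_E: "g \<in> carrier G \<Longrightarrow> e \<in> E \<Longrightarrow> \<phi>E g e \<in> E"
  using actV.element_image actE.element_image by blast+

lemma reduced_walk_act:
  "reduced_walk x es y \<Longrightarrow> g \<in> carrier G \<Longrightarrow> reduced_walk (\<phi>V g x) (map (\<phi>E g) es) (\<phi>V g y)"
proof (induction es arbitrary: x)
  case Nil
  then show ?case
    by (auto simp: act_V)
next
  case (Cons e es)
  then have "reduced_walk (\<phi>V g (terminus e)) (map (\<phi>E g) es) (\<phi>V g y)"
    by simp
  moreover have "\<phi>E g (hd es) \<noteq> \<phi>E g (rv e)" if "es \<noteq> []"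
    using Cons.prems that actE.inj_prop[OF Cons.prems(2)] rv_in_E
    by (cases es) (auto dest: inj_onD)
  ultimately show ?case
    using Cons.prems by (auto simp: terminus_act org_act rv_act act_E hd_map)
qed

lemma geodesic_act:
  "x \<in> V \<Longrightarrow> y \<in> V \<Longrightarrow> g \<in> carrier G \<Longrightarrow> geodesic (\<phi>V g x) (\<phi>V g y) = map (\<phi>E g) (geodesic x y)"
  by (simp add: geodesic_eq reduced_walk_act reduced_walk_geodesic)

lemma dist_act: "x \<in> V \<Longrightarrow> y \<in> V \<Longrightarrow> g \<in> carrier G \<Longrightarrow> dist (\<phi>V g x) (\<phi>V g y) = dist x y"
  by (simp add: dist_def geodesic_act)

lemma ecc_act_le:
  assumes "finite S" "S \<subseteq> V" "g \<in> carrier G" "m \<in> V" and inv_S: "\<phi>V (inv g) ` S \<subseteq> S"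
  shows "ecc S (\<phi>V g m) \<le> ecc S m"
proof -
  have "dist (\<phi>V g m) s \<le> ecc S m" if "s \<in> S" for s
  proof -
    have "s = \<phi>V g (\<phi>V (inv g) s)"
      using actV.orbit_sym_aux[of "inv g" s] assms that by auto
    then have "dist (\<phi>V g m) s = dist m (\<phi>V (inv g) s)"
      using assms that by (metis act_V dist_act inv_closed subsetD)
    then show ?thesis
      using dist_le_ecc inv_S assms(1) that by fastforce
  qed
  then show ?thesis
    unfolding ecc_def using assms by (cases "S = {}") (auto simp: Max_le_iff)
qed

lemma edges_in_same_orbit:
  assumes "finite (orbits G E \<phi>E)" "set ws \<subseteq> E" "card (orbits G E \<phi>E) < length ws"
  obtains i j g where "i < j" "j < length ws" "g \<in> carrier G" "\<phi>E g (ws ! i) = ws ! j"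
proof -
  have "set (map (orbit G \<phi>E) ws) \<subseteq> orbits G E \<phi>E"
    using assms(2) unfolding orbits_def by auto
  then obtain i j where ij: "i < j" "j < length ws" "orbit G \<phi>E (ws ! i) = orbit G \<phi>E (ws ! j)"
    using pigeonhole_nth assms(1,3) by blast
  then have "ws ! j \<in> orbit G \<phi>E (ws ! i)"
    using actE.orbit_refl assms(2) nth_mem by (metis subsetD)
  then obtain g where "g \<in> carrier G" "\<phi>E g (ws ! i) = ws ! j"
    by (auto simp: orbit_def)
  then show thesis
    using that ij by blast
qed

lemma inverts_edge_if_short_orbit:
  assumes h: "h \<in> carrier G" and m: "m \<in> V" "\<phi>V h m \<noteq> m"
    and short: "dist m (\<phi>V h m) \<le> 1" "dist m (\<phi>V h (\<phi>V h m)) \<le> 1"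
  shows "\<exists>e\<in>E. \<phi>E h e = rv e"
proof -
  define m2 m3 where "m2 = \<phi>V h m" and "m3 = \<phi>V h m2"
  have V: "m2 \<in> V" "m3 \<in> V"
    unfolding m2_def m3_def using h m by (simp_all add: act_V)
  have d12: "dist m m2 = 1"
    using short(1) dist_eq_0_iff[OF m(1) V(1)] m(2) unfolding m2_def by simp
  then have d23: "dist m2 m3 = 1"
    using dist_act[OF m(1) V(1) h] unfolding m2_def m3_def by simp
  have "m3 = m"
  proof (rule ccontr)
    assume "m3 \<noteq> m"
    then show False
      using dist_eq_2_of_adjacent[OF m(1) V d12 d23] short(2) unfolding m2_def m3_def by simp
  qed
  obtain e where e: "geodesic m m2 = [e]"
    using dist_eq_1_geodesic[OF d12] by blast
  then have "e \<in> E"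
    using reduced_walk_geodesic[OF m(1) V(1)] by simp
  have "geodesic m2 m = [\<phi>E h e]"
    using geodesic_act[OF m(1) V(1) h] e \<open>m3 = m\<close> unfolding m3_def m2_def by simp
  moreover have "geodesic m2 m = [rv e]"
    using geodesic_eq[OF reduced_walk_rev[OF reduced_walk_geodesic[OF m(1) V(1)]]] e by simp
  ultimately show ?thesis
    using \<open>e \<in> E\<close> by (metis list.inject)
qed

definition fixed_vertices :: "'g set \<Rightarrow> 'v set" where
  "fixed_vertices H = {x \<in> V. \<forall>h\<in>H. \<phi>V h x = x}"

text \<open>The group permutes the centre of an orbit, which is a vertex or an edge.\<close>
theorem finite_subgroup_fixes_vertex:
  assumes H: "subgroup H G" "finite H"
    and no_inversion: "\<And>h e. h \<in> H \<Longrightarrow> e \<in> E \<Longrightarrow> \<phi>E h e \<noteq> rv e"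
  shows "fixed_vertices H \<noteq> {}"
proof -
  have H_carrier: "h \<in> carrier G" if "h \<in> H" for h
    using H(1) that by (rule subgroup.mem_carrier)
  obtain x0 where x0: "x0 \<in> V"
    using V_nonempty by blast
  define S where "S = (\<lambda>h. \<phi>V h x0) ` H"
  have S: "finite S" "S \<noteq> {}" "S \<subseteq> V"
    unfolding S_def using H x0 subgroup.one_closed[OF H(1)] by (auto intro: act_V H_carrier)
  have S_closed: "\<phi>V h ` S \<subseteq> S" if "h \<in> H" for h
  proof (rule image_subsetI)
    fix s
    assume "s \<in> S"
    then obtain h' where "h' \<in> H" "s = \<phi>V h' x0"
      unfolding S_def by blast
    then have "\<phi>V h s = \<phi>V (h \<otimes> h') x0" and "h \<otimes> h' \<in> H"
      using that x0 H(1) by (simp_all add: actV.composition_rule H_carrier subgroup.m_closed)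
    then show "\<phi>V h s \<in> S"
      unfolding S_def by blast
  qed
  obtain m where m: "m \<in> V" "\<And>m'. m' \<in> V \<Longrightarrow> ecc S m \<le> ecc S m'"
    using ex_has_least_nat[of "\<lambda>m. m \<in> V" x0 "ecc S"] x0 by blast
  have centre: "\<phi>V h m' \<in> V \<and> ecc S (\<phi>V h m') = ecc S m"
    if "h \<in> H" "m' \<in> V" "ecc S m' = ecc S m" for h m'
    using that ecc_act_le[OF S(1,3) H_carrier, of h m'] S_closed[OF subgroup.m_inv_closed[OF H(1)]]
      m(2)[of "\<phi>V h m'"] act_V H_carrier by fastforce
  have "dist m (\<phi>V h m) \<le> 1" "dist m (\<phi>V h (\<phi>V h m)) \<le> 1" if "h \<in> H" for h
    using ecc_minimizers_adjacent[OF S m] centre[OF that] centre[OF that, of "\<phi>V h m"] m(1) by auto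
  then show ?thesis
    using inverts_edge_if_short_orbit[OF H_carrier m(1)] no_inversion m(1)
    unfolding fixed_vertices_def by blast
qed

end

section \<open>Barycentric subdivision\<close>

context sgraph
begin

text \<open>A new vertex \<open>Inr {e, rv e}\<close> is put in the middle of every geometric edge;
  \<open>(e, False)\<close> is the half of \<open>e\<close> from \<open>org e\<close> to the midpoint and \<open>(e, True)\<close> its reverse.\<close>
definition bary_V :: "('v + 'e set) set" where
  "bary_V = Inl ` V \<union> Inr ` (\<lambda>e. {e, rv e}) ` E"

definition bary_E :: "('e \<times> bool) set" where
  "bary_E = E \<times> UNIV"

definition bary_org :: "'e \<times> bool \<Rightarrow> 'v + 'e set" where
  "bary_org = (\<lambda>(e, b). if b then Inr {e, rv e} else Inl (org e))"

definition bary_rv :: "'e \<times> bool \<Rightarrow> 'e \<times> bool" where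
  "bary_rv = (\<lambda>(e, b). (e, \<not> b))"

lemma bary_org_simps [simp]:
  "bary_org (e, True) = Inr {e, rv e}" "bary_org (e, False) = Inl (org e)"
  by (simp_all add: bary_org_def)

lemma bary_rv_simp [simp]: "bary_rv (e, b) = (e, \<not> b)"
  by (simp add: bary_rv_def)

lemma mem_bary_E [simp]: "(e, b) \<in> bary_E \<longleftrightarrow> e \<in> E"
  by (simp add: bary_E_def)

lemma Inl_mem_bary_V [simp]: "Inl x \<in> bary_V \<longleftrightarrow> x \<in> V"
  by (auto simp: bary_V_def)

lemma Inr_mem_bary_V: "e \<in> E \<Longrightarrow> Inr {e, rv e} \<in> bary_V"
  by (auto simp: bary_V_def)

lemma bary_V_cases:
  assumes "x \<in> bary_V"
  obtains y where "x = Inl y" "y \<in> V" | e where "x = Inr {e, rv e}" "e \<in> E"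
  using assms unfolding bary_V_def by blast

lemma doubleton_rv: "e \<in> E \<Longrightarrow> {rv e, rv (rv e)} = {e, rv e}"
  by auto

lemma bary_serre_graph: "serre_graph bary_V bary_E bary_org bary_rv"
  unfolding serre_graph_def
proof
  fix x
  assume "x \<in> bary_E"
  then obtain e b where "x = (e, b)" "e \<in> E"
    by (cases x) simp
  then show "bary_org x \<in> bary_V \<and> bary_rv x \<in> bary_E \<and> bary_rv (bary_rv x) = x \<and> bary_rv x \<noteq> x"
    using Inr_mem_bary_V org_in_V by (cases b) auto
qed

lemma bary_edges_at_Inl: "{p \<in> bary_E. bary_org p = Inl y} = (\<lambda>e. (e, False)) ` {e \<in> E. org e = y}"
  by (auto simp: bary_E_def bary_org_def split: if_splits)

lemma bary_edges_at_Inr: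
  "e \<in> E \<Longrightarrow> {p \<in> bary_E. bary_org p = Inr {e, rv e}} = {(e, True), (rv e, True)}"
  by (auto simp: bary_E_def bary_org_def doubleton_eq_iff rv_in_E split: if_splits)

lemma bary_valence_Inl: "valence bary_E bary_org (Inl y) = valence E org y"
  unfolding valence_def bary_edges_at_Inl by (simp add: card_image inj_on_def)

lemma bary_valence_Inr: "e \<in> E \<Longrightarrow> valence bary_E bary_org (Inr {e, rv e}) = 2"
  unfolding valence_def using rv_neq[of e] by (auto simp: bary_edges_at_Inr card_insert_if)

lemma bary_no_terminal_vertex:
  assumes "\<And>y. y \<in> V \<Longrightarrow> \<not> terminal_vertex E org y" and "x \<in> bary_V"
  shows "\<not> terminal_vertex bary_E bary_org x"
  using assms(2)
proof (cases rule: bary_V_cases)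
  case (1 y)
  have "finite {p \<in> bary_E. bary_org p = Inl y} \<longleftrightarrow> finite {e \<in> E. org e = y}"
    by (simp add: bary_edges_at_Inl finite_image_iff inj_on_def)
  then show ?thesis
    using 1 assms(1)[of y] bary_valence_Inl[of y] unfolding terminal_vertex_def by simp
next
  case (2 e)
  then show ?thesis
    using bary_valence_Inr unfolding terminal_vertex_def by simp
qed

end

context stree
begin

interpretation bary: sgraph bary_V bary_E bary_org bary_rv
  by (rule sgraph.intro[OF bary_serre_graph])

definition lift :: "'e list \<Rightarrow> ('e \<times> bool) list" where
  "lift es = concat (map (\<lambda>e. [(e, False), (rv e, True)]) es)"

lemma lift_Nil [simp]: "lift [] = []"
  and lift_Cons [simp]: "lift (e # es) = (e, False) # (rv e, True) # lift es"
  by (simp_all add: lift_def)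

lemma bary_walk_lift: "reduced_walk x es y \<Longrightarrow> bary.walk (Inl x) (lift es) (Inl y)"
proof (induction es arbitrary: x)
  case (Cons e es)
  then have "bary.walk (Inl (terminus e)) (lift es) (Inl y)" and "e \<in> E"
    by simp_all
  then show ?case
    using Cons.prems rv_in_E doubleton_rv by auto
qed simp

text \<open>A reduced walk between old vertices crosses every midpoint it enters.\<close>
lemma bary_reduced_walk_Inl:
  "bary.reduced_walk (Inl a) P (Inl b) \<Longrightarrow> \<exists>es. reduced_walk a es b \<and> P = lift es"
proof (induction "length P" arbitrary: P a rule: less_induct)
  case less
  show ?case
  proof (cases P)
    case Nil
    then show ?thesis
      using less.prems by (intro exI[of _ "[]"]) auto
  next
    case (Cons p P1)
    then obtain e where p: "p = (e, False)" and e: "e \<in> E" "org e = a"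
      and P1: "bary.reduced_walk (Inr {e, rv e}) P1 (Inl b)" "P1 \<noteq> [] \<Longrightarrow> hd P1 \<noteq> (e, True)"
      using less.prems by (cases p; cases "snd p") auto
    then obtain q P2 where P1_eq: "P1 = q # P2"
      by (cases P1) auto
    then obtain f where q: "q = (f, True)" "{f, rv f} = {e, rv e}"
      and P2: "bary.reduced_walk (Inl (org f)) P2 (Inl b)" "P2 \<noteq> [] \<Longrightarrow> hd P2 \<noteq> (f, False)"
      using P1 by (cases q; cases "snd q") auto
    then have "f = rv e"
      using P1(2) P1_eq by (auto simp: doubleton_eq_iff)
    obtain es where es: "reduced_walk (terminus e) es b" "P2 = lift es"
      using less.hyps[of P2] P2(1) \<open>f = rv e\<close> Cons P1_eq by auto
    have "es \<noteq> [] \<Longrightarrow> hd es \<noteq> rv e"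
      using P2(2) es(2) \<open>f = rv e\<close> by (cases es) auto
    then have "reduced_walk a (e # es) b"
      using e es(1) by simp
    moreover have "P = lift (e # es)"
      using Cons p P1_eq q \<open>f = rv e\<close> es(2) by simp
    ultimately show ?thesis
      by blast
  qed
qed

lemma bary_reduced_walk_to_midpoint:
  assumes "e \<in> E" and P: "bary.reduced_walk (Inl (org e)) P (Inr {e, rv e})"
  shows "P \<noteq> [] \<and> hd P = (e, False)"
proof -
  have "P \<noteq> []"
    using P by (cases P) auto
  then obtain P' q where P_eq: "P = P' @ [q]"
    by (metis rev_exhaust)
  then obtain z where z: "bary.reduced_walk (Inl (org e)) P' z" "bary.reduced_walk z [q] (Inr {e, rv e})"
    using bary.reduced_walk_appendD P by blast
  then obtain f where q: "q = (f, False)" "z = Inl (org f)" "{f, rv f} = {e, rv e}"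
    by (cases q; cases "snd q") auto
  then obtain es where es: "reduced_walk (org e) es (org f)" "P' = lift es"
    using bary_reduced_walk_Inl z(1) by blast
  have "hd P = (e, False)"
  proof (cases "f = e")
    case True
    then have "es = []"
      using es(1) reduced_walk_closed by simp
    then show ?thesis
      using True P_eq es(2) q(1) by simp
  next
    case False
    then have "f = rv e"
      using q(3) by (auto simp: doubleton_eq_iff)
    moreover have "reduced_walk (org e) [e] (terminus e)"
      using assms(1) terminus_in_V by simp
    ultimately have "es = [e]"
      using es(1) reduced_walk_unique assms(1) by auto
    then show ?thesis
      using P_eq es(2) by simp
  qed
  then show ?thesis
    using \<open>P \<noteq> []\<close> by simp
qed

lemma bary_reduced_walk_closed: "bary.reduced_walk x P x \<Longrightarrow> P = []"
proof (induction x)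
  case (Inl a)
  then show ?case
    using bary_reduced_walk_Inl reduced_walk_closed by fastforce
next
  case (Inr m)
  show ?case
  proof (rule ccontr)
    assume "P \<noteq> []"
    then obtain p P' where "P = p # P'"
      by (cases P) auto
    then obtain e where "m = {e, rv e}" "e \<in> E"
      and P': "bary.reduced_walk (Inl (org e)) P' (Inr m)" "P' \<noteq> [] \<Longrightarrow> hd P' \<noteq> (e, False)"
      using Inr by (cases p; cases "snd p") auto
    then show False
      using bary_reduced_walk_to_midpoint by blast
  qed
qed

lemma bary_walk_via_Inl:
  assumes "P \<in> bary_V"
  obtains a r1 r2 where "a \<in> V" "bary.walk P r1 (Inl a)" "bary.walk (Inl a) r2 P"
  using assms
proof (cases rule: bary_V_cases)
  case (1 y)
  then show ?thesis
    using that[of y "[]" "[]"] by simp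
next
  case (2 e)
  then show ?thesis
    using that[of "org e" "[(e, True)]" "[(e, False)]"] Inr_mem_bary_V org_in_V by simp
qed

lemma bary_tree: "is_tree bary_V bary_E bary_org bary_rv"
proof -
  have walks: "\<exists>es. bary.walk P es Q" if P: "P \<in> bary_V" and Q: "Q \<in> bary_V" for P Q
  proof -
    obtain a r1 r2 where a: "a \<in> V" "bary.walk P r1 (Inl a)"
      using bary_walk_via_Inl[OF P] by metis
    obtain b s1 s2 where b: "b \<in> V" "bary.walk (Inl b) s2 Q"
      using bary_walk_via_Inl[OF Q] by metis
    have "bary.walk (Inl a) (lift (geodesic a b)) (Inl b)"
      using bary_walk_lift[OF reduced_walk_geodesic[OF a(1) b(1)]] .
    then show ?thesis
      using a(2) b(2) by (meson bary.walk_append)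
  qed
  have "P = Q \<or> (\<exists>es. es \<noteq> [] \<and> is_path bary_E bary_org bary_rv es \<and>
      bary_org (hd es) = P \<and> bary_org (bary_rv (last es)) = Q)" if PQ: "P \<in> bary_V" "Q \<in> bary_V" for P Q
  proof -
    obtain es where "bary.walk P es Q"
      using walks[OF PQ] by blast
    then show ?thesis
      using bary.walk_iff_is_path by (cases "es = []") auto
  qed
  moreover have "bary_V \<noteq> {}"
    using V_nonempty Inl_mem_bary_V by blast
  ultimately have "connected_graph bary_V bary_E bary_org bary_rv"
    unfolding connected_graph_def by blast
  moreover have "\<not> (\<exists>es. es \<noteq> [] \<and> reduced_path bary_E bary_org bary_rv es \<and>
      bary_org (bary_rv (last es)) = bary_org (hd es))"
    using bary.reduced_walk_iff_reduced_path bary_reduced_walk_closed by blast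
  ultimately show ?thesis
    unfolding is_tree_def using bary_serre_graph by blast
qed

end

context tree_action
begin

definition bary_\<phi>V :: "'g \<Rightarrow> 'v + 'e set \<Rightarrow> 'v + 'e set" where
  "bary_\<phi>V g = (\<lambda>x \<in> bary_V. case x of Inl y \<Rightarrow> Inl (\<phi>V g y) | Inr m \<Rightarrow> Inr (\<phi>E g ` m))"

definition bary_\<phi>E :: "'g \<Rightarrow> 'e \<times> bool \<Rightarrow> 'e \<times> bool" where
  "bary_\<phi>E g = (\<lambda>p \<in> bary_E. (\<phi>E g (fst p), snd p))"

lemma bary_\<phi>V_Inl [simp]: "y \<in> V \<Longrightarrow> bary_\<phi>V g (Inl y) = Inl (\<phi>V g y)"
  by (simp add: bary_\<phi>V_def)

lemma bary_\<phi>V_Inr [simp]: "e \<in> E \<Longrightarrow> bary_\<phi>V g (Inr {e, rv e}) = Inr {\<phi>E g e, \<phi>E g (rv e)}"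
  by (simp add: bary_\<phi>V_def Inr_mem_bary_V)

lemma bary_\<phi>E_simp [simp]: "e \<in> E \<Longrightarrow> bary_\<phi>E g (e, b) = (\<phi>E g e, b)"
  by (simp add: bary_\<phi>E_def)

lemma bary_graph_action: "graph_action G bary_V bary_E bary_org bary_rv bary_\<phi>V bary_\<phi>E"
proof -
  have "group_action G bary_V bary_\<phi>V"
  proof (rule group_actionI)
    show "bary_\<phi>V g x \<in> bary_V" if "g \<in> carrier G" "x \<in> bary_V" for g x
      using that(2) by (cases rule: bary_V_cases) (auto simp: that(1) act_V act_E rv_act Inr_mem_bary_V)
    show "bary_\<phi>V \<one> x = x" if "x \<in> bary_V" for x
      using that by (cases rule: bary_V_cases) (auto simp: rv_in_E act_one_V act_one_E)
    show "bary_\<phi>V (g \<otimes> h) x = bary_\<phi>V g (bary_\<phi>V h x)"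
      if "g \<in> carrier G" "h \<in> carrier G" "x \<in> bary_V" for g h x
      using that(3) by (cases rule: bary_V_cases)
        (auto simp: that(1,2) act_V act_E rv_act actV.composition_rule actE.composition_rule)
  qed (simp_all add: group_axioms bary_\<phi>V_def)
  moreover have "group_action G bary_E bary_\<phi>E"
  proof (rule group_actionI)
    show "bary_\<phi>E g p \<in> bary_E" if "g \<in> carrier G" "p \<in> bary_E" for g p
      using that by (cases p) (simp add: act_E)
    show "bary_\<phi>E \<one> p = p" if "p \<in> bary_E" for p
      using that by (cases p) (simp add: act_one_E)
    show "bary_\<phi>E (g \<otimes> h) p = bary_\<phi>E g (bary_\<phi>E h p)"
      if "g \<in> carrier G" "h \<in> carrier G" "p \<in> bary_E" for g h p
      using that by (cases p) (simp add: act_E actE.composition_rule)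
  qed (simp_all add: group_axioms bary_\<phi>E_def)
  moreover have "bary_\<phi>V g (bary_org p) = bary_org (bary_\<phi>E g p) \<and> bary_\<phi>E g (bary_rv p) = bary_rv (bary_\<phi>E g p)"
    if "g \<in> carrier G" "p \<in> bary_E" for g p
    using that by (cases p; cases "snd p") (auto simp: org_act rv_act org_in_V)
  ultimately show ?thesis
    unfolding graph_action_def by blast
qed

lemma bary_no_inversion: "p \<in> bary_E \<Longrightarrow> bary_\<phi>E g p \<noteq> bary_rv p"
  by (cases p) simp

lemma bary_finite_stabilizer:
  assumes V: "\<And>y. y \<in> V \<Longrightarrow> finite (stabilizer G \<phi>V y)"
    and E: "\<And>e. e \<in> E \<Longrightarrow> finite (stabilizer G \<phi>E e)"
    and x: "x \<in> bary_V"
  shows "finite (stabilizer G bary_\<phi>V x)"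
  using x
proof (cases rule: bary_V_cases)
  case (1 y)
  then have "stabilizer G bary_\<phi>V x = stabilizer G \<phi>V y"
    by (auto simp: stabilizer_def act_V)
  then show ?thesis
    using V \<open>y \<in> V\<close> by simp
next
  case (2 e)
  then have "stabilizer G bary_\<phi>V x \<subseteq> {g \<in> carrier G. \<phi>E g e = e} \<union> {g \<in> carrier G. \<phi>E g e = rv e}"
    by (auto simp: stabilizer_def doubleton_eq_iff)
  moreover have "finite {g \<in> carrier G. \<phi>E g e = y}" for y
    using actE.finite_transporter E \<open>e \<in> E\<close> by blast
  ultimately show ?thesis
    using finite_subset by blast
qed

lemma bary_finite_orbits:
  assumes "finite (orbits G E \<phi>E)"
  shows "finite (orbits G bary_E bary_\<phi>E)"
proof -
  have "orbit G bary_\<phi>E (e, b) = orbit G \<phi>E e \<times> {b}" if "e \<in> E" for e b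
    using that by (auto simp: orbit_def)
  then have "orbits G bary_E bary_\<phi>E \<subseteq> (\<lambda>(Ob, b). Ob \<times> {b}) ` (orbits G E \<phi>E \<times> UNIV)"
    unfolding orbits_def bary_E_def by (force intro: image_eqI[where x = "(orbit G \<phi>E _, _)"])
  then show ?thesis
    using assms finite_subset by fastforce
qed

end

section \<open>Amalgams acting on trees\<close>

locale finite_amalgam = group G for G (structure) +
  fixes A B C
  assumes amalgam: "amalgam_decomposition G A B C"
    and finite_A: "finite A" and finite_B: "finite B"
    and C_ne_A: "C \<noteq> A" and C_ne_B: "C \<noteq> B"
    and C_maximal: "\<And>H. subgroup H G \<Longrightarrow> C \<subseteq> H \<Longrightarrow> H \<subseteq> A \<Longrightarrow> H = C \<or> H = A"
begin

lemma subgroup_A: "subgroup A G"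
  and subgroup_B: "subgroup B G"
  and C_eq: "C = A \<inter> B"
  and generate_A_B: "generate G (A \<union> B) = carrier G"
  using amalgam unfolding amalgam_decomposition_def by simp_all

lemma A_carrier: "a \<in> A \<Longrightarrow> a \<in> carrier G"
  and B_carrier: "b \<in> B \<Longrightarrow> b \<in> carrier G"
  using subgroup.mem_carrier[OF subgroup_A] subgroup.mem_carrier[OF subgroup_B] by auto

lemma subgroup_C: "subgroup C G"
  using subgroups_Inter_pair[OF subgroup_A subgroup_B] C_eq by simp

lemma C_subset_A: "C \<subseteq> A" and C_subset_B: "C \<subseteq> B"
  using C_eq by simp_all

lemma A_minus_C_nonempty: "\<exists>a. a \<in> A - C" and B_minus_C_nonempty: "\<exists>b. b \<in> B - C"
  using C_ne_A C_ne_B C_subset_A C_subset_B by blast+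

lemma C_mult_mem_diff:
  assumes K: "subgroup K G" "C \<subseteq> K" and "c \<in> C" "k \<in> K - C"
  shows "c \<otimes> k \<in> K - C"
proof -
  have "c \<in> carrier G" "k \<in> carrier G" "c \<otimes> k \<in> K"
    using assms subgroup.mem_carrier subgroup.m_closed by (metis Diff_iff subsetD)+
  moreover have "k = inv c \<otimes> (c \<otimes> k)"
    using \<open>c \<in> carrier G\<close> \<open>k \<in> carrier G\<close> by (simp add: m_assoc[symmetric])
  ultimately show ?thesis
    using assms(3,4) subgroup_C by (metis Diff_iff subgroup.m_closed subgroup.m_inv_closed)
qed

end

locale amalgam_tree_action =
  tree_action V E org rv G \<phi>V \<phi>E + finite_amalgam G A B C
  for V :: "'v set" and E :: "'e set" and org rv and G (structure) and \<phi>V :: "'g \<Rightarrow> 'v \<Rightarrow> 'v"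
    and \<phi>E :: "'g \<Rightarrow> 'e \<Rightarrow> 'e" and A B C +
  assumes no_inversion: "\<And>g e. g \<in> carrier G \<Longrightarrow> e \<in> E \<Longrightarrow> \<phi>E g e \<noteq> rv e"
    and finite_stabilizer: "\<And>x. x \<in> V \<Longrightarrow> finite (stabilizer G \<phi>V x)"
    and finite_orbits: "finite (orbits G E \<phi>E)"
    and no_terminal_vertex: "\<And>x. x \<in> V \<Longrightarrow> \<not> terminal_vertex E org x"
begin

text \<open>The element \<open>a \<otimes> b\<close> has infinite order, but vertex stabilizers are finite.\<close>
lemma no_vertex_fixed_by_both:
  assumes "a \<in> A - C" "b \<in> B - C" "x \<in> V" "\<phi>V a x = x" "\<phi>V b x = x"
  shows False
proof -
  have "a \<in> carrier G" "b \<in> carrier G"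
    using assms(1,2) A_carrier B_carrier by auto
  then have "a \<otimes> b \<in> stabilizer G \<phi>V x"
    using assms(3-5) by (simp add: stabilizer_def actV.composition_rule)
  then obtain n :: nat where "n > 0" "(a \<otimes> b) [^] n = \<one>"
    using finite_subgroup_power_eq_one[OF actV.stabilizer_subgroup[OF assms(3)] finite_stabilizer[OF assms(3)]]
    by blast
  then show False
    using amalgam_power_ne_one[OF amalgam assms(1,2)] by blast
qed

lemma fixed_A_moved_by_B:
  assumes "x \<in> fixed_vertices A" "b \<in> B - C"
  shows "\<phi>V b x \<noteq> x"
proof
  assume "\<phi>V b x = x"
  obtain a where "a \<in> A - C"
    using A_minus_C_nonempty by blast
  then show False
    using no_vertex_fixed_by_both[OF \<open>a \<in> A - C\<close> assms(2) _ _ \<open>\<phi>V b x = x\<close>] assms(1)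
    unfolding fixed_vertices_def by blast
qed

lemma fixed_A_disjoint_fixed_B: "fixed_vertices A \<inter> fixed_vertices B = {}"
proof -
  obtain b where "b \<in> B - C"
    using B_minus_C_nonempty by blast
  then show ?thesis
    using fixed_A_moved_by_B unfolding fixed_vertices_def by blast
qed

lemma closest_fixed_pair:
  obtains v u where "v \<in> fixed_vertices A" "u \<in> fixed_vertices B"
    "\<And>v' u'. v' \<in> fixed_vertices A \<Longrightarrow> u' \<in> fixed_vertices B \<Longrightarrow> dist v u \<le> dist v' u'"
proof -
  have "fixed_vertices A \<noteq> {}"
    using subgroup_A finite_A by (rule finite_subgroup_fixes_vertex) (simp add: no_inversion A_carrier)
  moreover have "fixed_vertices B \<noteq> {}"
    using subgroup_B finite_B by (rule finite_subgroup_fixes_vertex) (simp add: no_inversion B_carrier)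
  ultimately obtain v0 u0 where "v0 \<in> fixed_vertices A" "u0 \<in> fixed_vertices B"
    by blast
  then obtain p where "fst p \<in> fixed_vertices A \<and> snd p \<in> fixed_vertices B"
    "\<forall>q. fst q \<in> fixed_vertices A \<and> snd q \<in> fixed_vertices B \<longrightarrow> dist (fst p) (snd p) \<le> dist (fst q) (snd q)"
    using ex_has_least_nat[of "\<lambda>p. fst p \<in> fixed_vertices A \<and> snd p \<in> fixed_vertices B" "(v0, u0)"
        "\<lambda>p. dist (fst p) (snd p)"] by auto
  then show thesis
    using that[of "fst p" "snd p"] by (metis fst_conv snd_conv)
qed

end

locale amalgam_bridge = amalgam_tree_action V E org rv G \<phi>V \<phi>E A B C
  for V :: "'v set" and E :: "'e set" and org rv and G (structure) and \<phi>V \<phi>E A B C +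
  fixes v u
  assumes v_fixed: "v \<in> fixed_vertices A" and u_fixed: "u \<in> fixed_vertices B"
    and closest: "\<And>v' u'. v' \<in> fixed_vertices A \<Longrightarrow> u' \<in> fixed_vertices B \<Longrightarrow> dist v u \<le> dist v' u'"
begin

lemma v_in_V: "v \<in> V" and u_in_V: "u \<in> V"
  and A_fixes_v: "a \<in> A \<Longrightarrow> \<phi>V a v = v" and B_fixes_u: "b \<in> B \<Longrightarrow> \<phi>V b u = u"
  using v_fixed u_fixed unfolding fixed_vertices_def by auto

definition e0 :: 'e where
  "e0 = hd (geodesic v u)"

lemma bridge_walk: "reduced_walk v (e0 # tl (geodesic v u)) u"
proof -
  have "v \<noteq> u"
    using fixed_A_disjoint_fixed_B v_fixed u_fixed by blast
  then have "geodesic v u \<noteq> []"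
    using reduced_walk_geodesic[OF v_in_V u_in_V] by auto
  then show ?thesis
    using reduced_walk_geodesic[OF v_in_V u_in_V] unfolding e0_def by simp
qed

lemma e0_in_E: "e0 \<in> E" and org_e0: "org e0 = v"
  using bridge_walk by simp_all

lemma C_fixes_e0: "c \<in> C \<Longrightarrow> \<phi>E c e0 = e0"
proof -
  assume "c \<in> C"
  then have "c \<in> carrier G" "\<phi>V c v = v" "\<phi>V c u = u"
    using C_subset_A C_subset_B A_carrier A_fixes_v B_fixes_u by auto
  then have "reduced_walk v (map (\<phi>E c) (e0 # tl (geodesic v u))) u"
    using reduced_walk_act[OF bridge_walk] by metis
  then show "\<phi>E c e0 = e0"
    using reduced_walk_unique[OF _ bridge_walk] by fastforce
qed

text \<open>By minimality of the bridge, \<open>A\<close> cannot fix the other end of \<open>e0\<close>.\<close>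
lemma stabilizer_e0_in_A: "{a \<in> A. \<phi>E a e0 = e0} = C"
proof -
  define H where "H = {a \<in> A. \<phi>E a e0 = e0}"
  have "H = stabilizer G \<phi>E e0 \<inter> A"
    unfolding H_def stabilizer_def using A_carrier by auto
  then have "subgroup H G"
    using actE.stabilizer_subgroup[OF e0_in_E] subgroup_A subgroups_Inter_pair by simp
  moreover have "C \<subseteq> H" "H \<subseteq> A"
    unfolding H_def using C_subset_A C_fixes_e0 by auto
  moreover have "H \<noteq> A"
  proof
    assume "H = A"
    have "\<phi>V a (terminus e0) = terminus e0" if "a \<in> A" for a
    proof -
      have "\<phi>E a e0 = e0"
        using that \<open>H = A\<close> unfolding H_def by blast
      then show ?thesis
        using terminus_act[OF A_carrier[OF that] e0_in_E] by simp
    qed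
    then have "terminus e0 \<in> fixed_vertices A"
      unfolding fixed_vertices_def using terminus_in_V[OF e0_in_E] by blast
    moreover have "dist (terminus e0) u < dist v u"
      using dist_eq[OF bridge_walk] dist_eq[of "terminus e0" "tl (geodesic v u)" u] bridge_walk by simp
    ultimately show False
      using closest[OF _ u_fixed] by fastforce
  qed
  ultimately show ?thesis
    using C_maximal unfolding H_def by blast
qed

definition star :: "'e set" where
  "star = (\<lambda>a. \<phi>E a e0) ` A"

lemma e0_in_star: "e0 \<in> star"
proof -
  have "\<phi>E \<one> e0 = e0"
    using act_one_E[OF e0_in_E] .
  then show ?thesis
    unfolding star_def using subgroup.one_closed[OF subgroup_A] by (metis image_eqI)
qed

lemma star_edges: "f \<in> star \<Longrightarrow> f \<in> E \<and> org f = v"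
proof -
  assume "f \<in> star"
  then obtain a where "a \<in> A" "f = \<phi>E a e0"
    unfolding star_def by blast
  then show "f \<in> E \<and> org f = v"
    using act_E[OF A_carrier e0_in_E] org_act[OF A_carrier e0_in_E] A_fixes_v org_e0 by simp
qed

lemma card_star: "card star * card C = card A"
proof -
  interpret actA: group_action "G\<lparr>carrier := A\<rparr>" E \<phi>E
    using actE.induced_action[OF subgroup_A] .
  have "orbit (G\<lparr>carrier := A\<rparr>) \<phi>E e0 = star"
    unfolding orbit_def star_def by auto
  moreover have "stabilizer (G\<lparr>carrier := A\<rparr>) \<phi>E e0 = C"
    using stabilizer_e0_in_A unfolding stabilizer_def by simp
  ultimately show ?thesis
    using actA.orbit_stabilizer_theorem[OF e0_in_E] by (simp add: order_def)
qed

text \<open>The geodesics from \<open>u\<close> to \<open>w\<close> and to \<open>b w\<close> fork on the bridge, because \<open>b\<close> moves \<open>v\<close>.\<close>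
lemma B_moves_behind_e0:
  assumes b: "b \<in> B - C" and s: "reduced_walk v s w" "s \<noteq> [] \<Longrightarrow> hd s \<noteq> e0"
  shows "\<exists>es. reduced_walk v (e0 # es) (\<phi>V b w)"
proof -
  have "b \<in> carrier G" "\<phi>V b u = u"
    using b B_carrier B_fixes_u by auto
  define q where "q = rev (map rv (e0 # tl (geodesic v u)))"
  have q: "reduced_walk u q v" "last q = rv e0"
    unfolding q_def using reduced_walk_rev[OF bridge_walk] by (simp_all add: last_rev)
  have "reduced_walk u (q @ s) w"
    using q s e0_in_E by (intro reduced_walk_append) auto
  then have bqs: "reduced_walk u (map (\<phi>E b) (q @ s)) (\<phi>V b w)"
    using reduced_walk_act[OF _ \<open>b \<in> carrier G\<close>] \<open>\<phi>V b u = u\<close> by metis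
  obtain c xs ys where split: "q = c @ xs" "map (\<phi>E b) (q @ s) = c @ ys"
    and fork: "xs \<noteq> [] \<longrightarrow> ys \<noteq> [] \<longrightarrow> hd xs \<noteq> hd ys"
    using common_prefix_decomp by blast
  have "xs \<noteq> []"
  proof
    assume "xs = []"
    then have "map (\<phi>E b) q @ map (\<phi>E b) s = q @ ys"
      using split by simp
    then have "map (\<phi>E b) q = q"
      by (simp add: append_eq_append_conv)
    then have "reduced_walk u q (\<phi>V b v)"
      using reduced_walk_act[OF q(1) \<open>b \<in> carrier G\<close>] \<open>\<phi>V b u = u\<close> by simp
    then have "v = \<phi>V b v"
      by (rule reduced_walk_target_unique[OF q(1)])
    then show False
      using fixed_A_moved_by_B[OF v_fixed b] by simp
  qed
  have "reduced_walk u (c @ xs) v" "reduced_walk u (c @ ys) (\<phi>V b w)"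
    using q(1) bqs split by simp_all
  then have walk: "reduced_walk v (rev (map rv xs) @ ys) (\<phi>V b w)"
    using \<open>xs \<noteq> []\<close> fork by (intro reduced_walk_fork) auto
  have "hd (rev (map rv xs)) = e0"
    using \<open>xs \<noteq> []\<close> split(1) q(2) e0_in_E by (simp add: hd_rev last_map)
  then have "rev (map rv xs) @ ys = e0 # tl (rev (map rv xs) @ ys)"
    using \<open>xs \<noteq> []\<close> by (cases "rev (map rv xs)") auto
  then show ?thesis
    using walk by metis
qed

text \<open>Images of \<open>v\<close> under reduced words, by the factor of their leftmost letter (the rightmost
  letter may be taken in \<open>B - C\<close>, since \<open>A\<close> fixes \<open>v\<close>).\<close>
inductive A_word and B_word where
  A_wordI: "a \<in> A - C \<Longrightarrow> B_word w \<Longrightarrow> A_word (\<phi>V a w)"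
| B_wordI: "b \<in> B - C \<Longrightarrow> w = v \<or> A_word w \<Longrightarrow> B_word (\<phi>V b w)"

lemma word_in_V: "A_word w \<Longrightarrow> w \<in> V" "B_word w \<Longrightarrow> w \<in> V"
  by (induction rule: A_word_B_word.inducts) (auto simp: act_V A_carrier B_carrier v_in_V)

lemma A_word_act_C:
  assumes "c \<in> C" "A_word w"
  shows "A_word (\<phi>V c w)"
  using assms(2)
proof (cases rule: A_word.cases)
  case (A_wordI a w')
  then have "\<phi>V c w = \<phi>V (c \<otimes> a) w'" "c \<otimes> a \<in> A - C"
    using assms(1) A_wordI C_subset_A A_carrier word_in_V actV.composition_rule C_mult_mem_diff[OF subgroup_A]
    by auto
  then show ?thesis
    using A_wordI A_word_B_word.A_wordI by simp
qed

lemma B_word_act_C: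
  assumes "c \<in> C" "B_word w"
  shows "B_word (\<phi>V c w)"
  using assms(2)
proof (cases rule: B_word.cases)
  case (B_wordI b w')
  then have "\<phi>V c w = \<phi>V (c \<otimes> b) w'" "c \<otimes> b \<in> B - C"
    using assms(1) B_wordI C_subset_B B_carrier word_in_V v_in_V actV.composition_rule
      C_mult_mem_diff[OF subgroup_B] by auto
  then show ?thesis
    using B_wordI A_word_B_word.B_wordI by simp
qed

definition word_vertices :: "'v set" where
  "word_vertices = insert v (Collect A_word \<union> Collect B_word)"

lemma word_vertices_subset: "word_vertices \<subseteq> V"
  unfolding word_vertices_def using v_in_V word_in_V by auto

lemma A_act_B_word: "a \<in> A \<Longrightarrow> w = v \<or> B_word w \<Longrightarrow> \<phi>V a w \<in> word_vertices"
  unfolding word_vertices_def using A_fixes_v B_word_act_C A_wordI by (cases "a \<in> C") auto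

lemma B_act_A_word: "b \<in> B \<Longrightarrow> w = v \<or> A_word w \<Longrightarrow> \<phi>V b w \<in> word_vertices"
  unfolding word_vertices_def using A_fixes_v C_subset_A A_word_act_C B_wordI by (cases "b \<in> C") auto

lemma A_preserves_words:
  assumes "a \<in> A" "w \<in> word_vertices"
  shows "\<phi>V a w \<in> word_vertices"
proof (cases "A_word w")
  case True
  then obtain a' w' where "w = \<phi>V a' w'" "a' \<in> A - C" "B_word w'"
    by (cases rule: A_word.cases) auto
  moreover have "\<phi>V a (\<phi>V a' w') = \<phi>V (a \<otimes> a') w'" "a \<otimes> a' \<in> A"
    using calculation assms(1) A_carrier word_in_V subgroup.m_closed[OF subgroup_A]
    by (auto simp: actV.composition_rule)
  ultimately show ?thesis
    using A_act_B_word by simp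
next
  case False
  then show ?thesis
    using assms A_act_B_word unfolding word_vertices_def by blast
qed

lemma B_preserves_words:
  assumes "b \<in> B" "w \<in> word_vertices"
  shows "\<phi>V b w \<in> word_vertices"
proof (cases "B_word w")
  case True
  then obtain b' w' where "w = \<phi>V b' w'" "b' \<in> B - C" "w' = v \<or> A_word w'"
    by (cases rule: B_word.cases) auto
  moreover have "\<phi>V b (\<phi>V b' w') = \<phi>V (b \<otimes> b') w'" "b \<otimes> b' \<in> B"
    using calculation assms(1) B_carrier word_in_V v_in_V subgroup.m_closed[OF subgroup_B]
    by (auto simp: actV.composition_rule)
  ultimately show ?thesis
    using B_act_A_word by simp
next
  case False
  then show ?thesis
    using assms B_act_A_word unfolding word_vertices_def by blast
qed

lemma orbit_v_in_word_vertices: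
  assumes "g \<in> carrier G"
  shows "\<phi>V g v \<in> word_vertices"
proof (rule actV.generate_preserves[where S = "A \<union> B"])
  show "A \<union> B \<subseteq> carrier G" "word_vertices \<subseteq> V"
    using A_carrier B_carrier word_vertices_subset by auto
  show "\<phi>V s x \<in> word_vertices" "\<phi>V (inv s) x \<in> word_vertices"
    if "s \<in> A \<union> B" "x \<in> word_vertices" for s x
    using that A_preserves_words B_preserves_words subgroup.m_inv_closed[OF subgroup_A]
      subgroup.m_inv_closed[OF subgroup_B] by auto
  show "g \<in> generate G (A \<union> B)" "v \<in> word_vertices"
    using assms generate_A_B unfolding word_vertices_def by auto
qed

lemma word_geodesics:
  "A_word w \<Longrightarrow> \<exists>f es. reduced_walk v (f # es) w \<and> f \<in> star \<and> f \<noteq> e0"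
  "B_word w \<Longrightarrow> \<exists>es. reduced_walk v (e0 # es) w"
proof (induction rule: A_word_B_word.inducts)
  case (A_wordI a w)
  then obtain es where "reduced_walk v (e0 # es) w"
    by blast
  then have "reduced_walk v (\<phi>E a e0 # map (\<phi>E a) es) (\<phi>V a w)"
    using reduced_walk_act[OF _ A_carrier] A_fixes_v A_wordI(1) by fastforce
  moreover have "\<phi>E a e0 \<in> star" "\<phi>E a e0 \<noteq> e0"
    using A_wordI(1) stabilizer_e0_in_A unfolding star_def by auto
  ultimately show ?case
    by blast
next
  case (B_wordI b w)
  have "\<exists>s. reduced_walk v s w \<and> (s \<noteq> [] \<longrightarrow> hd s \<noteq> e0)"
  proof (cases "w = v")
    case True
    then show ?thesis
      using v_in_V by (intro exI[of _ "[]"]) simp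
  next
    case False
    then obtain f es where "reduced_walk v (f # es) w" "f \<noteq> e0"
      using B_wordI(2) by blast
    then show ?thesis
      by (intro exI[of _ "f # es"]) simp
  qed
  then show ?case
    using B_moves_behind_e0[OF B_wordI(1)] by blast
qed

lemma orbit_v_behind_star:
  assumes "g \<in> carrier G"
  shows "\<phi>V g v = v \<or> (\<exists>f es. reduced_walk v (f # es) (\<phi>V g v) \<and> f \<in> star)"
  using orbit_v_in_word_vertices[OF assms] word_geodesics e0_in_star unfolding word_vertices_def by blast

text \<open>The geodesic from \<open>v\<close> to a point of its orbit starts in the star, so it prolongs the
  reversed walk.\<close>
lemma dist_orbit_v_outside_star:
  assumes walk: "reduced_walk v (f # es) y" and "f \<notin> star" and g: "g \<in> carrier G"
  shows "Suc (length es) \<le> dist y (\<phi>V g v)"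
proof -
  have walk_back: "reduced_walk y (rev (map rv (f # es))) v"
    using reduced_walk_rev[OF walk] .
  have "f \<in> E"
    using walk by simp
  show ?thesis
    using orbit_v_behind_star[OF g]
  proof
    assume "\<phi>V g v = v"
    then show ?thesis
      using dist_eq[OF walk_back] by simp
  next
    assume "\<exists>f' es'. reduced_walk v (f' # es') (\<phi>V g v) \<and> f' \<in> star"
    then obtain f' es' where "reduced_walk v (f' # es') (\<phi>V g v)" "f' \<noteq> f"
      using \<open>f \<notin> star\<close> by blast
    then have "reduced_walk y (rev (map rv (f # es)) @ f' # es') (\<phi>V g v)"
      using walk_back \<open>f \<in> E\<close> by (intro reduced_walk_append) (auto simp: last_rev)
    then show ?thesis
      using dist_eq by fastforce
  qed
qed

text \<open>Two edges of a long reduced walk from \<open>v\<close> lie in the same orbit; if the walk leaves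
  through an edge outside the star, the translation between them brings the orbit of \<open>v\<close> too
  close to the later edge.\<close>
lemma edges_at_v_in_star:
  assumes "f \<in> E" "org f = v"
  shows "f \<in> star"
proof (rule ccontr)
  assume "f \<notin> star"
  obtain es y where walk: "reduced_walk v (f # es) y" "length es = card (orbits G E \<phi>E)"
    using long_reduced_walk[OF no_terminal_vertex assms(1), of "card (orbits G E \<phi>E)"] assms(2) by auto
  define ws where "ws = f # es"
  have "set ws \<subseteq> E" "card (orbits G E \<phi>E) < length ws"
    using reduced_walk_edges walk unfolding ws_def by auto
  then obtain i j g where ij: "i < j" "j < length ws" and g: "g \<in> carrier G" "\<phi>E g (ws ! i) = ws ! j"
    using finite_orbits by (elim edges_in_same_orbit)
  have prefix_i: "reduced_walk v (take (Suc i) ws) (terminus (ws ! i))"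
    using reduced_walk_take[OF walk(1)[folded ws_def]] ij by simp
  have prefix_j: "reduced_walk v (f # take j es) (terminus (ws ! j))"
    using reduced_walk_take[OF walk(1)[folded ws_def] ij(2)] unfolding ws_def by simp
  have "ws ! i \<in> E"
    using reduced_walk_edges[OF prefix_i] ij by (simp add: take_Suc_conv_app_nth)
  then have "terminus (ws ! j) = \<phi>V g (terminus (ws ! i))"
    using terminus_act[OF g(1)] g(2) by simp
  then have "dist (terminus (ws ! j)) (\<phi>V g v) = dist (terminus (ws ! i)) v"
    using dist_act[OF _ v_in_V g(1)] reduced_walk_endpoints[OF prefix_i] by simp
  also have "\<dots> = Suc i"
    using dist_eq[OF prefix_i] dist_sym[OF prefix_i] ij by simp
  finally have "dist (terminus (ws ! j)) (\<phi>V g v) = Suc i" .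
  moreover have "Suc (length (take j es)) \<le> dist (terminus (ws ! j)) (\<phi>V g v)"
    using dist_orbit_v_outside_star[OF prefix_j \<open>f \<notin> star\<close> g(1)] .
  ultimately show False
    using ij unfolding ws_def by simp
qed

lemma valence_v: "valence E org v * card C = card A"
proof -
  have "{e \<in> E. org e = v} = star"
    using edges_at_v_in_star star_edges by auto
  then show ?thesis
    unfolding valence_def using card_star by simp
qed

end

context amalgam_tree_action
begin

theorem fixed_vertex_valence:
  "\<exists>x\<in>V. (\<forall>a\<in>A. \<phi>V a x = x) \<and> valence E org x * card C = card A"
proof -
  obtain v u where "v \<in> fixed_vertices A" "u \<in> fixed_vertices B"
    "\<And>v' u'. v' \<in> fixed_vertices A \<Longrightarrow> u' \<in> fixed_vertices B \<Longrightarrow> dist v u \<le> dist v' u'"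
    using closest_fixed_pair by blast
  then interpret amalgam_bridge V E org rv G \<phi>V \<phi>E A B C v u
    by unfold_locales
  show ?thesis
    using v_in_V A_fixes_v valence_v by blast
qed

end

context tree_action
begin

text \<open>Inversions are removed by subdividing; a midpoint has valence 2, which is excluded by the
  index assumption.\<close>
theorem amalgam_fixed_vertex_valence:
  assumes "finite_amalgam G A B C" and "card A \<noteq> 2 * card C"
    and "\<And>x. x \<in> V \<Longrightarrow> finite (stabilizer G \<phi>V x)" "\<And>e. e \<in> E \<Longrightarrow> finite (stabilizer G \<phi>E e)"
    and "finite (orbits G E \<phi>E)" "\<And>x. x \<in> V \<Longrightarrow> \<not> terminal_vertex E org x"
  shows "\<exists>x\<in>V. (\<forall>a\<in>A. \<phi>V a x = x) \<and> valence E org x * card C = card A"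
proof -
  interpret bary: amalgam_tree_action bary_V bary_E bary_org bary_rv G bary_\<phi>V bary_\<phi>E A B C
  proof (intro amalgam_tree_action.intro amalgam_tree_action_axioms.intro tree_action.intro
      stree.intro sgraph.intro stree_axioms.intro tree_action_axioms.intro)
    show "serre_graph bary_V bary_E bary_org bary_rv" "is_tree bary_V bary_E bary_org bary_rv"
      "graph_action G bary_V bary_E bary_org bary_rv bary_\<phi>V bary_\<phi>E" "finite_amalgam G A B C"
      by (fact bary_serre_graph bary_tree bary_graph_action assms(1))+
    show "bary_\<phi>E g p \<noteq> bary_rv p" if "p \<in> bary_E" for g p
      using that by (rule bary_no_inversion)
    show "finite (stabilizer G bary_\<phi>V x)" if "x \<in> bary_V" for x
      using bary_finite_stabilizer assms(3,4) that by blast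
    show "finite (orbits G bary_E bary_\<phi>E)"
      using bary_finite_orbits assms(5) .
    show "\<not> terminal_vertex bary_E bary_org x" if "x \<in> bary_V" for x
      using bary_no_terminal_vertex assms(6) that by blast
  qed
  obtain x where x: "x \<in> bary_V" "\<forall>a\<in>A. bary_\<phi>V a x = x" "valence bary_E bary_org x * card C = card A"
    using bary.fixed_vertex_valence by blast
  then show ?thesis
  proof (cases rule: bary_V_cases)
    case (1 y)
    then show ?thesis
      using x bary_valence_Inl by auto
  next
    case (2 e)
    then show ?thesis
      using x(3) bary_valence_Inr assms(2) by simp
  qed
qed

end

section \<open>The projective Clifford-cyclotomic group\<close>

lemma (in group) S4_D4_Dn_amalgam_finite_amalgam:
  assumes "S4_D4_Dn_amalgam n G A B C" "n \<ge> 8"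
  shows "finite_amalgam G A B C" "card A = 24" "card C = 8"
proof -
  have amalgam: "amalgam_decomposition G A B C"
    and iso: "G\<lparr>carrier := A\<rparr> \<cong> sym_group 4" "G\<lparr>carrier := B\<rparr> \<cong> dihedral_group n"
      "G\<lparr>carrier := C\<rparr> \<cong> dihedral_group 4"
    using assms(1) unfolding S4_D4_Dn_amalgam_def by auto
  show card: "card A = 24" "card C = 8"
    using iso_card_carrier[OF iso(1)] iso_card_carrier[OF iso(3)] card_sym_group_4 card_dihedral_group[of 4]
    by simp_all
  have "card B = 2 * n" "finite B"
    using iso_card_carrier[OF iso(2)] card_dihedral_group[of n] assms(2)
      iso_finite_carrier[OF iso(2) finite_dihedral_group] by simp_all
  have "finite A"
    using card(1) card.infinite by fastforce
  have "subgroup A G" "subgroup C G"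
    using amalgam subgroups_Inter_pair unfolding amalgam_decomposition_def by auto
  moreover have "{2..<3} = {2 :: nat}"
    by auto
  then have "Factorial_Ring.prime (3 :: nat)"
    by (simp add: prime_nat_iff')
  ultimately have "H = C \<or> H = A" if "subgroup H G" "C \<subseteq> H" "H \<subseteq> A" for H
    using subgroup_between_prime_index[OF _ that] \<open>finite A\<close> card by simp
  then show "finite_amalgam G A B C"
    using amalgam card \<open>card B = 2 * n\<close> \<open>finite A\<close> \<open>finite B\<close> assms(2) is_group
    by (intro finite_amalgam.intro finite_amalgam_axioms.intro) auto
qed

theorem theorem7p6:
  fixes n :: nat
    and V :: "'v set" and E :: "'e set" and org :: "'e \<Rightarrow> 'v" and rv :: "'e \<Rightarrow> 'e"
    and \<phi>V :: "(complex^2^2) set \<Rightarrow> 'v \<Rightarrow> 'v" and \<phi>E :: "(complex^2^2) set \<Rightarrow> 'e \<Rightarrow> 'e"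
    and A B C :: "(complex^2^2) set set"
  assumes "4 dvd n" and "n \<ge> 8"
    and "S4_D4_Dn_amalgam n (PCG n) A B C"
    and "is_tree V E org rv"
    and "\<forall>v \<in> V. \<not> terminal_vertex E org v"
    and "graph_action (PCG n) V E org rv \<phi>V \<phi>E"
    and "\<forall>v \<in> V. finite (stabilizer (PCG n) \<phi>V v)"
    and "\<forall>e \<in> E. finite (stabilizer (PCG n) \<phi>E e)"
    and "finite (orbits (PCG n) V \<phi>V)" and "finite (orbits (PCG n) E \<phi>E)"
  shows "\<exists>v \<in> V. (\<forall>g \<in> A. \<phi>V g v = v) \<and> valence E org v = 3"
proof -
  have "serre_graph V E org rv"
    using assms(4) unfolding is_tree_def by simp
  then interpret tree_action V E org rv "PCG n" \<phi>V \<phi>E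
    using assms(4,6)
    by (intro tree_action.intro stree.intro sgraph.intro stree_axioms.intro tree_action_axioms.intro)
  have "finite_amalgam (PCG n) A B C" and card: "card A = 24" "card C = 8"
    using S4_D4_Dn_amalgam_finite_amalgam assms(2,3) by blast+
  then have "\<exists>v\<in>V. (\<forall>a\<in>A. \<phi>V a v = v) \<and> valence E org v * card C = card A"
    using assms(5,7,8,10) by (intro amalgam_fixed_vertex_valence) auto
  then show ?thesis
    using card by auto
qed

end
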